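(* Let $X$ be a diffeological space. Consider the functor $\mathcal{DS}/X\to\mathcal{DVS}$ sending a morphism $f:U\to V$ from a plot $p:U\to X$ to a plot $q:V\to X$ (so $q\circ f=p$) to the morphism given by the commutative square with $Tf:TU\to TV$ on top, $f:U\to V$ on the bottom and the tangent bundle projections $\pi_U,\pi_V$ as vertical maps. The colimit of this functor (in $\mathcal{DVS}$) is $\pi_X:T^{dvs}(X)\to X$, and the colimit of the composite functor $\mathcal{DS}/X\to\mathcal{DVS}\to\mathcal{VSD}$ (in $\mathcal{VSD}$) is $\pi_X:T^H(X)\to X$.
   Context: A diffeological space is a set with, for every open subset $U$ of every $\mathbb{R}^n$, a set of maps $U\to X$ called plots, containing constants, closed under precomposition with smooth maps, and satisfying the sheaf condition; smooth maps send plots to plots. $\mathcal{DS}/X$ is the category whose objects are all plots $p:U\to X$ ($U$ open in some $\mathbb{R}^n$) and whose morphisms $p\to q$ are smooth maps $f:U\to V$ with $q\circ f=p$; $TU$ is the usual tangent bundle of the open set $U$. A vector space with diffeology over $X$ is a smooth map $V\to X$ of diffeological spaces with a vector space structure on each fibre; $\mathcal{VSD}$ is the category of these (over all diffeological spaces), with morphisms the commutative squares of smooth maps $(g:V\to W, f:X\to Y)$ with $g$ linear on each fibre. A diffeological vector space over $X$ is such an object for which fibrewise addition $V\times_XV\to V$, scalar multiplication $\mathbb{R}\times V\to V$ and the zero section are smooth; $\mathcal{DVS}$ is the full subcategory of $\mathcal{VSD}$ on these. The internal tangent space $T_x(X)$ is the colimit in real vector spaces, over plots $p:U\to X$ with $U$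 a connected open neighbourhood of $0$ and $p(0)=x$ (morphisms: smooth $f$ with $f(0)=0$, $q\circ f=p$), of $p\mapsto T_0(U)$, $f\mapsto f_*$; $TX=\coprod_xT_x(X)$ with projection $\pi_X$. For a plot $f:U\to X$ with $U$ connected, $Tf:TU\to TX$ sends $T_u(U)$ into $T_{f(u)}(X)$ via $T_u(U)\cong T_0(U-u)\to T_{f(u)}(X)$ induced by $w\mapsto f(w+u)$. Hector's diffeology on $TX$ is generated by all such $Tf$ ($T^H(X)$); the dvs diffeology ($T^{dvs}(X)$) is the smallest diffeology containing Hector's making $\pi_X$ a diffeological vector space over $X$. *)

theory Defs
  imports "HOL-Analysis.Analysis"
begin

text \<open>R^n is modelled as the set of real sequences vanishing from index n on.
  The topology used is the subspace topology of the product topology on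
  nat => real, which on R n is the usual Euclidean topology.\<close>

type_synonym pt = "nat \<Rightarrow> real"

definition Rn :: "nat \<Rightarrow> pt set" where
  "Rn n = {x. \<forall>i\<ge>n. x i = 0}"

definition open_Rn :: "nat \<Rightarrow> pt set \<Rightarrow> bool" where
  "open_Rn n U \<longleftrightarrow> openin (top_of_set (Rn n)) U"

definition zv :: pt where "zv = (\<lambda>_. 0)"

definition pquot :: "nat \<Rightarrow> (pt \<Rightarrow> real) \<Rightarrow> pt \<Rightarrow> real \<Rightarrow> real" where
  "pquot i g x t = (g (x(i := x i + t)) - g x) / t"

definition pd :: "nat \<Rightarrow> (pt \<Rightarrow> real) \<Rightarrow> pt \<Rightarrow> real" where
  "pd i g x = Lim (at (0::real)) (pquot i g x)"

fun Ck :: "nat \<Rightarrow> nat \<Rightarrow> pt set \<Rightarrow> (pt \<Rightarrow> real) \<Rightarrow> bool" where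
  "Ck n 0 U g = continuous_on U g"
| "Ck n (Suc k) U g = (continuous_on U g \<and>
      (\<forall>i<n. (\<forall>x\<in>U. (pquot i g x \<longlongrightarrow> pd i g x) (at 0)) \<and> Ck n k U (pd i g)))"

definition smooth_real :: "nat \<Rightarrow> pt set \<Rightarrow> (pt \<Rightarrow> real) \<Rightarrow> bool" where
  "smooth_real n U g \<longleftrightarrow> (\<forall>k. Ck n k U g)"

definition smooth_map :: "nat \<Rightarrow> pt set \<Rightarrow> nat \<Rightarrow> pt set \<Rightarrow> (pt \<Rightarrow> pt) \<Rightarrow> bool" where
  "smooth_map n U m V f \<longleftrightarrow> f ` U \<subseteq> V \<and> f ` U \<subseteq> Rn m \<and>
     (\<forall>j<m. smooth_real n U (\<lambda>x. f x j))"

definition Dm :: "nat \<Rightarrow> nat \<Rightarrow> (pt \<Rightarrow> pt) \<Rightarrow> pt \<Rightarrow> pt \<Rightarrow> pt" where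
  "Dm n m f u v = (\<lambda>j. if j < m then (\<Sum>i<n. pd i (\<lambda>y. f y j) u * v i) else 0)"

definition Tmap :: "nat \<Rightarrow> nat \<Rightarrow> (pt \<Rightarrow> pt) \<Rightarrow> pt \<times> pt \<Rightarrow> pt \<times> pt" where
  "Tmap n m f z = (f (fst z), Dm n m f (fst z) (snd z))"

type_synonym 'a dfg = "nat \<Rightarrow> pt set \<Rightarrow> (pt \<Rightarrow> 'a) \<Rightarrow> bool"
type_synonym 'a plot = "nat \<times> pt set \<times> (pt \<Rightarrow> 'a)"

text \<open>D n U p: p is a plot with domain U, an open subset of R^n.\<close>

definition diffeology :: "'a set \<Rightarrow> 'a dfg \<Rightarrow> bool" where
  "diffeology X D \<longleftrightarrow>
     (\<forall>n U p. D n U p \<longrightarrow> open_Rn n U \<and> p ` U \<subseteq> X) \<and>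
     (\<forall>n U x. open_Rn n U \<and> x \<in> X \<longrightarrow> D n U (\<lambda>_. x)) \<and>
     (\<forall>n U p m W f. D n U p \<and> open_Rn m W \<and> smooth_map m W n U f \<longrightarrow> D m W (p \<circ> f)) \<and>
     (\<forall>n U p. open_Rn n U \<and> p ` U \<subseteq> X \<and>
        (\<forall>u\<in>U. \<exists>W. open_Rn n W \<and> u \<in> W \<and> W \<subseteq> U \<and> D n W p) \<longrightarrow> D n U p) \<and>
     (\<forall>n U p q. D n U p \<and> (\<forall>u\<in>U. p u = q u) \<longrightarrow> D n U q)"

definition dsmooth :: "'a set \<Rightarrow> 'a dfg \<Rightarrow> 'b set \<Rightarrow> 'b dfg \<Rightarrow> ('a \<Rightarrow> 'b) \<Rightarrow> bool" where
  "dsmooth X DX Y DY f \<longleftrightarrow> f ` X \<subseteq> Y \<and> (\<forall>n U p. DX n U p \<longrightarrow> DY n U (f \<circ> p))"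

definition std_dfg :: "nat \<Rightarrow> pt set \<Rightarrow> pt dfg" where
  "std_dfg n U = (\<lambda>k W g. open_Rn k W \<and> smooth_map k W n U g)"

section \<open>Vector spaces with diffeology over a base (objects of VSD)\<close>

record ('v, 'b) vsd =
  vs_tot :: "'v set"
  vs_totD :: "'v dfg"
  vs_bas :: "'b set"
  vs_basD :: "'b dfg"
  vs_prj :: "'v \<Rightarrow> 'b"
  vs_add :: "'v \<Rightarrow> 'v \<Rightarrow> 'v"
  vs_smul :: "real \<Rightarrow> 'v \<Rightarrow> 'v"
  vs_zero :: "'b \<Rightarrow> 'v"

definition fib :: "('v, 'b, 'c) vsd_scheme \<Rightarrow> 'b \<Rightarrow> 'v set" where
  "fib E x = {v \<in> vs_tot E. vs_prj E v = x}"

definition fibre_vs :: "('v, 'b, 'c) vsd_scheme \<Rightarrow> bool" where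
  "fibre_vs E \<longleftrightarrow> (\<forall>x\<in>vs_bas E.
     vs_zero E x \<in> fib E x \<and>
     (\<forall>v\<in>fib E x. \<forall>w\<in>fib E x. vs_add E v w \<in> fib E x) \<and>
     (\<forall>a. \<forall>v\<in>fib E x. vs_smul E a v \<in> fib E x) \<and>
     (\<forall>u\<in>fib E x. \<forall>v\<in>fib E x. \<forall>w\<in>fib E x.
         vs_add E (vs_add E u v) w = vs_add E u (vs_add E v w)) \<and>
     (\<forall>v\<in>fib E x. \<forall>w\<in>fib E x. vs_add E v w = vs_add E w v) \<and>
     (\<forall>v\<in>fib E x. vs_add E v (vs_zero E x) = v) \<and>
     (\<forall>v\<in>fib E x. \<exists>w\<in>fib E x. vs_add E v w = vs_zero E x) \<and>
     (\<forall>v\<in>fib E x. vs_smul E 1 v = v) \<and>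
     (\<forall>a b. \<forall>v\<in>fib E x. vs_smul E a (vs_smul E b v) = vs_smul E (a * b) v) \<and>
     (\<forall>a b. \<forall>v\<in>fib E x. vs_smul E (a + b) v = vs_add E (vs_smul E a v) (vs_smul E b v)) \<and>
     (\<forall>a. \<forall>v\<in>fib E x. \<forall>w\<in>fib E x.
         vs_smul E a (vs_add E v w) = vs_add E (vs_smul E a v) (vs_smul E a w)))"

definition is_vsd :: "('v, 'b, 'c) vsd_scheme \<Rightarrow> bool" where
  "is_vsd E \<longleftrightarrow> diffeology (vs_tot E) (vs_totD E) \<and> diffeology (vs_bas E) (vs_basD E) \<and>
     dsmooth (vs_tot E) (vs_totD E) (vs_bas E) (vs_basD E) (vs_prj E) \<and> fibre_vs E"

text \<open>Diffeological vector space over the base: fibrewise addition (on the fibred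
  product V x_X V with its subset-of-product diffeology), scalar multiplication
  (on R x V with the product diffeology) and the zero section are smooth.\<close>

definition is_dvs :: "('v, 'b, 'c) vsd_scheme \<Rightarrow> bool" where
  "is_dvs E \<longleftrightarrow> is_vsd E \<and>
     (\<forall>n U a b. vs_totD E n U a \<and> vs_totD E n U b \<and>
        (\<forall>u\<in>U. vs_prj E (a u) = vs_prj E (b u)) \<longrightarrow>
        vs_totD E n U (\<lambda>u. vs_add E (a u) (b u))) \<and>
     (\<forall>n U r a. open_Rn n U \<and> smooth_real n U r \<and> vs_totD E n U a \<longrightarrow>
        vs_totD E n U (\<lambda>u. vs_smul E (r u) (a u))) \<and>
     (\<forall>n U q. vs_basD E n U q \<longrightarrow> vs_totD E n U (\<lambda>u. vs_zero E (q u)))"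

definition vsd_hom :: "('v, 'b, 'c) vsd_scheme \<Rightarrow> ('w, 'y, 'd) vsd_scheme \<Rightarrow>
    ('v \<Rightarrow> 'w) \<Rightarrow> ('b \<Rightarrow> 'y) \<Rightarrow> bool" where
  "vsd_hom E F g h \<longleftrightarrow>
     dsmooth (vs_tot E) (vs_totD E) (vs_tot F) (vs_totD F) g \<and>
     dsmooth (vs_bas E) (vs_basD E) (vs_bas F) (vs_basD F) h \<and>
     (\<forall>v\<in>vs_tot E. vs_prj F (g v) = h (vs_prj E v)) \<and>
     (\<forall>x\<in>vs_bas E. \<forall>v\<in>fib E x. \<forall>w\<in>fib E x. g (vs_add E v w) = vs_add F (g v) (g w)) \<and>
     (\<forall>x\<in>vs_bas E. \<forall>a. \<forall>v\<in>fib E x. g (vs_smul E a v) = vs_smul F a (g v))"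

definition TUobj :: "'a plot \<Rightarrow> (pt \<times> pt, pt) vsd" where
  "TUobj j = (case j of (n, U, p) \<Rightarrow>
     \<lparr> vs_tot = {z. fst z \<in> U \<and> snd z \<in> Rn n},
       vs_totD = (\<lambda>k W g. open_Rn k W \<and> smooth_map k W n U (fst \<circ> g)
                              \<and> smooth_map k W n (Rn n) (snd \<circ> g)),
       vs_bas = U,
       vs_basD = std_dfg n U,
       vs_prj = fst,
       vs_add = (\<lambda>a b. (fst a, \<lambda>i. snd a i + snd b i)),
       vs_smul = (\<lambda>r a. (fst a, \<lambda>i. r * snd a i)),
       vs_zero = (\<lambda>u. (u, zv)) \<rparr>)"

definition plots :: "'a dfg \<Rightarrow> 'a plot set" where
  "plots DX = {(n, U, p). DX n U p}"

definition dsx_mor :: "'a plot \<Rightarrow> 'a plot \<Rightarrow> (pt \<Rightarrow> pt) set" where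
  "dsx_mor j j' = (case j of (n, U, p) \<Rightarrow> case j' of (m, V, q) \<Rightarrow>
     {f. smooth_map n U m V f \<and> (\<forall>u\<in>U. q (f u) = p u)})"

section \<open>Internal tangent spaces T_x(X) (explicit colimit in real vector spaces)\<close>

definition Jx :: "'a dfg \<Rightarrow> 'a \<Rightarrow> 'a plot set" where
  "Jx DX x = {(n, U, p). DX n U p \<and> connected U \<and> zv \<in> U \<and> p zv = x}"

definition Jmor :: "'a plot \<Rightarrow> 'a plot \<Rightarrow> (pt \<Rightarrow> pt) set" where
  "Jmor j j' = (case j of (n, U, p) \<Rightarrow> case j' of (m, V, q) \<Rightarrow>
     {f. smooth_map n U m V f \<and> f zv = zv \<and> (\<forall>u\<in>U. q (f u) = p u)})"

text \<open>Direct sum of the T_0(U_j) = R^{n_j}: finitely supported families.\<close>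

definition FS :: "'a dfg \<Rightarrow> 'a \<Rightarrow> ('a plot \<Rightarrow> pt) set" where
  "FS DX x = {s. finite {j. s j \<noteq> zv} \<and> (\<forall>j. s j \<noteq> zv \<longrightarrow> j \<in> Jx DX x \<and> s j \<in> Rn (fst j))}"

definition inj :: "'a plot \<Rightarrow> pt \<Rightarrow> 'a plot \<Rightarrow> pt" where
  "inj j v = (\<lambda>k. if k = j then v else zv)"

inductive_set Nsp :: "'a dfg \<Rightarrow> 'a \<Rightarrow> ('a plot \<Rightarrow> pt) set" for DX x where
  N0: "(\<lambda>k i. 0) \<in> Nsp DX x"
| Ngen: "j \<in> Jx DX x \<Longrightarrow> j' \<in> Jx DX x \<Longrightarrow> f \<in> Jmor j j' \<Longrightarrow> v \<in> Rn (fst j) \<Longrightarrow>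
     (\<lambda>k i. inj j' (Dm (fst j) (fst j') f zv v) k i - inj j v k i) \<in> Nsp DX x"
| Nadd: "a \<in> Nsp DX x \<Longrightarrow> b \<in> Nsp DX x \<Longrightarrow> (\<lambda>k i. a k i + b k i) \<in> Nsp DX x"
| Nsmul: "a \<in> Nsp DX x \<Longrightarrow> (\<lambda>k i. r * a k i) \<in> Nsp DX x"

definition cls :: "'a dfg \<Rightarrow> 'a \<Rightarrow> ('a plot \<Rightarrow> pt) \<Rightarrow> ('a plot \<Rightarrow> pt) set" where
  "cls DX x s = {s' \<in> FS DX x. (\<lambda>k i. s' k i - s k i) \<in> Nsp DX x}"

definition Tsp :: "'a dfg \<Rightarrow> 'a \<Rightarrow> ('a plot \<Rightarrow> pt) set set" where
  "Tsp DX x = cls DX x ` FS DX x"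

type_synonym 'a tx = "'a \<times> ('a plot \<Rightarrow> pt) set"

definition TXset :: "'a set \<Rightarrow> 'a dfg \<Rightarrow> 'a tx set" where
  "TXset X DX = (SIGMA x:X. Tsp DX x)"

definition rep :: "('a plot \<Rightarrow> pt) set \<Rightarrow> 'a plot \<Rightarrow> pt" where
  "rep c = (SOME s. s \<in> c)"

definition tx_add :: "'a dfg \<Rightarrow> 'a tx \<Rightarrow> 'a tx \<Rightarrow> 'a tx" where
  "tx_add DX a b = (fst a, cls DX (fst a) (\<lambda>k i. rep (snd a) k i + rep (snd b) k i))"

definition tx_smul :: "'a dfg \<Rightarrow> real \<Rightarrow> 'a tx \<Rightarrow> 'a tx" where
  "tx_smul DX r a = (fst a, cls DX (fst a) (\<lambda>k i. r * rep (snd a) k i))"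

definition tx_zero :: "'a dfg \<Rightarrow> 'a \<Rightarrow> 'a tx" where
  "tx_zero DX x = (x, cls DX x (\<lambda>k i. 0))"

text \<open>Tp : TU -> TX for a plot p : U -> X.  T_u(U) = T_0(C - u), where C is the
  connected component of u in U, mapped into T_{p u}(X) via w |-> p(w + u).\<close>

definition Tleg :: "'a dfg \<Rightarrow> 'a plot \<Rightarrow> pt \<times> pt \<Rightarrow> 'a tx" where
  "Tleg DX j z = (case j of (n, U, p) \<Rightarrow>
     (let u = fst z; v = snd z in
       (p u, cls DX (p u)
          (inj (n, (\<lambda>w i. w i - u i) ` connected_component_set U u, \<lambda>w. p (\<lambda>i. w i + u i)) v))))"

definition Pleg :: "'a plot \<Rightarrow> pt \<Rightarrow> 'a" where
  "Pleg j = snd (snd j)"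

definition hector_gens :: "'a dfg \<Rightarrow> 'a tx plot set" where
  "hector_gens DX = {(k, W, Tleg DX j \<circ> g) | j k W g.
      j \<in> plots DX \<and> vs_totD (TUobj j) k W g}"

definition hector :: "'a set \<Rightarrow> 'a dfg \<Rightarrow> 'a tx dfg" where
  "hector X DX k W q \<longleftrightarrow> (\<forall>D. diffeology (TXset X DX) D \<and>
      (\<forall>(k', W', q') \<in> hector_gens DX. D k' W' q') \<longrightarrow> D k W q)"

definition TX_with :: "'a set \<Rightarrow> 'a dfg \<Rightarrow> 'a tx dfg \<Rightarrow> ('a tx, 'a) vsd" where
  "TX_with X DX D = \<lparr> vs_tot = TXset X DX, vs_totD = D, vs_bas = X, vs_basD = DX,
      vs_prj = fst, vs_add = tx_add DX, vs_smul = tx_smul DX, vs_zero = tx_zero DX \<rparr>"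

definition TXH :: "'a set \<Rightarrow> 'a dfg \<Rightarrow> ('a tx, 'a) vsd" where
  "TXH X DX = TX_with X DX (hector X DX)"

definition dvs_dfg :: "'a set \<Rightarrow> 'a dfg \<Rightarrow> 'a tx dfg" where
  "dvs_dfg X DX k W q \<longleftrightarrow> (\<forall>D. (\<forall>k' W' q'. hector X DX k' W' q' \<longrightarrow> D k' W' q') \<and>
      is_dvs (TX_with X DX D) \<longrightarrow> D k W q)"

definition TXdvs :: "'a set \<Rightarrow> 'a dfg \<Rightarrow> ('a tx, 'a) vsd" where
  "TXdvs X DX = TX_with X DX (dvs_dfg X DX)"

definition cocone :: "'a dfg \<Rightarrow> ('w, 'y, 'd) vsd_scheme \<Rightarrow>
    ('a plot \<Rightarrow> pt \<times> pt \<Rightarrow> 'w) \<Rightarrow> ('a plot \<Rightarrow> pt \<Rightarrow> 'y) \<Rightarrow> bool" where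
  "cocone DX W G H \<longleftrightarrow>
     (\<forall>j\<in>plots DX. vsd_hom (TUobj j) W (G j) (H j)) \<and>
     (\<forall>j\<in>plots DX. \<forall>j'\<in>plots DX. \<forall>f\<in>dsx_mor j j'.
        (\<forall>z\<in>vs_tot (TUobj j). G j' (Tmap (fst j) (fst j') f z) = G j z) \<and>
        (\<forall>u\<in>fst (snd j). H j' (f u) = H j u))"

definition mediator :: "'a dfg \<Rightarrow> ('a tx, 'a) vsd \<Rightarrow> ('w, 'y, 'd) vsd_scheme \<Rightarrow>
    ('a plot \<Rightarrow> pt \<times> pt \<Rightarrow> 'w) \<Rightarrow> ('a plot \<Rightarrow> pt \<Rightarrow> 'y) \<Rightarrow>
    ('a tx \<Rightarrow> 'w) \<Rightarrow> ('a \<Rightarrow> 'y) \<Rightarrow> bool" where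
  "mediator DX E W G H g h \<longleftrightarrow> vsd_hom E W g h \<and>
     (\<forall>j\<in>plots DX. \<forall>z\<in>vs_tot (TUobj j). g (Tleg DX j z) = G j z) \<and>
     (\<forall>j\<in>plots DX. \<forall>u\<in>fst (snd j). h (Pleg j u) = H j u)"

definition unique_mediator :: "'a dfg \<Rightarrow> ('a tx, 'a) vsd \<Rightarrow> ('w, 'y, 'd) vsd_scheme \<Rightarrow>
    ('a plot \<Rightarrow> pt \<times> pt \<Rightarrow> 'w) \<Rightarrow> ('a plot \<Rightarrow> pt \<Rightarrow> 'y) \<Rightarrow> bool" where
  "unique_mediator DX E W G H \<longleftrightarrow>
     (\<exists>g h. mediator DX E W G H g h) \<and>
     (\<forall>g h g' h'. mediator DX E W G H g h \<and> mediator DX E W G H g' h' \<longrightarrow>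
        (\<forall>v\<in>vs_tot E. g v = g' v) \<and> (\<forall>x\<in>vs_bas E. h x = h' x))"

end

(*
  T_x X is the colimit of the spaces T_0 U over the plots centred at x, realised as finitely
  supported families modulo the relations f_* v - v, and a vector of T_u U is sent to the class of
  v at the plot w |-> p (w + u) recentred at u.  A cocone (G, H) over DS/X with vertex W therefore
  induces, fibre by fibre, a unique linear map g: on the class of a family s it is the sum of the
  G_j (0, s_j), which vanishes on the relations because G is compatible with the morphisms of DS/X.
  This g is smooth for Hector's diffeology, since on a generator Tp o g' it equals G_p o g'.  When
  W is a diffeological vector space, the plots of TX along which g is smooth (and whose projection
  is a plot) are closed under the fibrewise operations, so they also contain the dvs diffeology.
*)

theory Submission
  imports Defs "HOL-Library.Function_Algebras" "HOL-Algebra.FiniteProduct"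
begin

section \<open>Smooth maps between open subsets of \<open>R\<^sup>n\<close>\<close>

lemma zv_eq_0 [simp]: "zv = 0"
  by (simp add: zv_def zero_fun_def)

lemma Rn_add: "v \<in> Rn n \<Longrightarrow> w \<in> Rn n \<Longrightarrow> v + w \<in> Rn n"
  by (simp add: Rn_def)

lemma Rn_diff: "v \<in> Rn n \<Longrightarrow> w \<in> Rn n \<Longrightarrow> v - w \<in> Rn n"
  by (simp add: Rn_def)

lemma Rn_scale: "v \<in> Rn n \<Longrightarrow> (\<lambda>i. r * v i) \<in> Rn n"
  by (simp add: Rn_def)

lemma zero_in_Rn [simp]: "0 \<in> Rn n"
  by (simp add: Rn_def)

lemma Dm_in_Rn: "Dm n m f u v \<in> Rn m"
  by (simp add: Rn_def Dm_def)

lemma open_Rn_subset: "open_Rn n U \<Longrightarrow> U \<subseteq> Rn n"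
  unfolding open_Rn_def by (metis openin_imp_subset)

lemma open_Rn_0_singleton: "open_Rn 0 {0}"
proof -
  have "Rn 0 = {0}"
    by (auto simp: Rn_def)
  then show ?thesis
    by (simp add: open_Rn_def)
qed

lemma const_off_zero_limit:
  assumes "\<And>t. t \<noteq> 0 \<Longrightarrow> f t = (c::real)"
  shows "(f \<longlongrightarrow> c) (at (0::real))" and "Lim (at (0::real)) f = c"
proof -
  show "(f \<longlongrightarrow> c) (at 0)"
    by (rule tendsto_eventually) (simp add: eventually_at_filter assms)
  then show "Lim (at (0::real)) f = c"
    by (rule tendsto_Lim[rotated]) simp
qed

lemma pquot_const: "pquot i (\<lambda>x. c) x = (\<lambda>t. 0)"
  by (rule ext) (simp add: pquot_def)

lemma pd_const: "pd i (\<lambda>x. c) = (\<lambda>x. 0)"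
  unfolding pd_def pquot_const by (rule ext, rule const_off_zero_limit(2)) simp

lemma Ck_const: "Ck n k U (\<lambda>x. c)"
  by (induction k arbitrary: c) (simp_all add: pd_const pquot_const)

lemma smooth_real_const: "smooth_real n U (\<lambda>x. c)"
  by (simp add: smooth_real_def Ck_const)

lemma pquot_coordinate: "t \<noteq> 0 \<Longrightarrow> pquot i (\<lambda>x. x j + c) x t = (if i = j then 1 else 0)"
  by (simp add: pquot_def)

lemma pd_coordinate: "pd i (\<lambda>x. x j + c) = (\<lambda>x. if i = j then 1 else 0)"
  unfolding pd_def by (rule ext, rule const_off_zero_limit(2), rule pquot_coordinate)

lemma continuous_on_coordinate: "continuous_on U (\<lambda>x::pt. x j)"
  by (rule continuous_on_product_then_coordinatewise[OF continuous_on_id])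

lemma Ck_coordinate: "Ck n k U (\<lambda>x. x j + c)"
proof -
  have cont: "continuous_on U (\<lambda>x. x j + c)"
    by (intro continuous_on_add continuous_on_coordinate continuous_on_const)
  show ?thesis
  proof (cases k)
    case (Suc k')
    have "Ck n k' U (\<lambda>x. if i = j then 1 else 0)" for i
      by (cases "i = j") (simp_all add: Ck_const)
    moreover have "(pquot i (\<lambda>x. x j + c) x \<longlongrightarrow> (if i = j then 1 else 0)) (at 0)" for i x
      by (rule const_off_zero_limit(1)) (rule pquot_coordinate)
    ultimately show ?thesis
      using Suc cont by (simp add: pd_coordinate)
  qed (simp add: cont)
qed

lemma smooth_real_coordinate: "smooth_real n U (\<lambda>x. x j + c)"
  by (simp add: smooth_real_def Ck_coordinate)

lemma continuous_on_translation: "continuous_on S (\<lambda>w::pt. w + u)"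
proof (rule continuous_on_coordinatewise_then_product)
  show "continuous_on S (\<lambda>w. (w + u) i)" for i
    by (simp add: continuous_on_add continuous_on_coordinate)
qed

lemma continuous_on_translation_diff: "continuous_on S (\<lambda>w::pt. w - u)"
proof (rule continuous_on_coordinatewise_then_product)
  show "continuous_on S (\<lambda>w. (w - u) i)" for i
    by (simp add: continuous_on_diff continuous_on_coordinate)
qed

lemma pquot_translate: "pquot i (\<lambda>w. g (w + u) - c) w = pquot i g (w + u)"
proof -
  have "(w(i := w i + t)) + u = (w + u)(i := (w + u) i + t)" for t
    by (auto simp: fun_eq_iff)
  then show ?thesis
    by (auto simp: pquot_def)
qed

lemma pd_translate: "pd i (\<lambda>w. g (w + u) - c) = (\<lambda>w. pd i g (w + u))"
  by (intro ext) (simp add: pd_def pquot_translate)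

lemma continuous_on_translate:
  fixes g :: "pt \<Rightarrow> 'a::real_normed_vector"
  assumes "continuous_on U g" and "\<And>w. w \<in> V \<Longrightarrow> w + u \<in> U"
  shows "continuous_on V (\<lambda>w. g (w + u) - c)"
proof -
  have "continuous_on V (\<lambda>w. g (w + u))"
    by (rule continuous_on_compose2[OF assms(1) continuous_on_translation]) (use assms(2) in blast)
  then show ?thesis
    by (rule continuous_on_diff[OF _ continuous_on_const])
qed

lemma Ck_translate:
  "Ck n k U g \<Longrightarrow> (\<And>w. w \<in> V \<Longrightarrow> w + u \<in> U) \<Longrightarrow> Ck n k V (\<lambda>w. g (w + u) - c)"
proof (induct k arbitrary: g c)
  case 0
  then show ?case
    using continuous_on_translate[of U g V u c] by (simp del: plus_fun_apply)
next
  case (Suc k)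
  have "(pquot i (\<lambda>w. g (w + u) - c) w \<longlongrightarrow> pd i (\<lambda>w. g (w + u) - c) w) (at 0)"
    if "i < n" "w \<in> V" for i w
    using Suc.prems that by (simp add: pquot_translate pd_translate del: plus_fun_apply)
  moreover have "Ck n k V (pd i (\<lambda>w. g (w + u) - c))" if "i < n" for i
    using Suc.hyps[of "pd i g" 0] Suc.prems that by (simp add: pd_translate del: plus_fun_apply)
  ultimately show ?case
    using Suc.prems continuous_on_translate[of U g V u c] by (simp del: plus_fun_apply)
qed

lemma smooth_map_image: "smooth_map m W n U f \<Longrightarrow> f ` W \<subseteq> U"
  by (simp add: smooth_map_def)

lemma smooth_map_const: "u \<in> U \<Longrightarrow> U \<subseteq> Rn n \<Longrightarrow> smooth_map k W n U (\<lambda>_. u)"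
  by (auto simp: smooth_map_def smooth_real_const)

lemma smooth_map_translation:
  assumes "\<And>w. w \<in> V \<Longrightarrow> w + u \<in> U" and "U \<subseteq> Rn n"
  shows "smooth_map n V n U (\<lambda>w. w + u)"
proof -
  have "smooth_real n V (\<lambda>x. (x + u) j)" for j
    using smooth_real_coordinate[of n V j "u j"] by simp
  moreover have "(\<lambda>w. w + u) ` V \<subseteq> Rn n"
    using assms by blast
  ultimately show ?thesis
    using assms by (simp add: smooth_map_def image_subset_iff)
qed

lemma smooth_map_id: "U \<subseteq> Rn n \<Longrightarrow> smooth_map n U n U (\<lambda>x. x)"
  using smooth_map_translation[of U 0 U n] by simp

lemma smooth_map_recentre:
  assumes f: "smooth_map n U m V f" and u: "u \<in> U"
    and W: "\<And>w. w \<in> W \<Longrightarrow> w + u \<in> U \<and> f (w + u) - f u \<in> V'"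
  shows "smooth_map n W m V' (\<lambda>w. f (w + u) - f u)"
  unfolding smooth_map_def
proof (intro conjI allI impI)
  show "(\<lambda>w. f (w + u) - f u) ` W \<subseteq> V'"
    using W by auto
  show "(\<lambda>w. f (w + u) - f u) ` W \<subseteq> Rn m"
    using f W u by (auto simp: smooth_map_def intro!: Rn_diff)
  fix j assume "j < m"
  then have "Ck n k U (\<lambda>y. f y j)" for k
    using f by (simp add: smooth_map_def smooth_real_def)
  then have "Ck n k W (\<lambda>w. f (w + u) j - f u j)" for k
    using W by (intro Ck_translate) auto
  then show "smooth_real n W (\<lambda>w. (f (w + u) - f u) j)"
    by (simp add: smooth_real_def)
qed

lemma Dm_translation:
  assumes "v \<in> Rn n"
  shows "Dm n n (\<lambda>w. w + u) w0 v = v"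
proof
  fix j
  have "(\<Sum>i<n. pd i (\<lambda>y. (y + u) j) w0 * v i) = (\<Sum>i<n. if i = j then v i else 0)"
    by (intro sum.cong) (simp_all add: pd_coordinate)
  then show "Dm n n (\<lambda>w. w + u) w0 v j = v j"
    using assms by (simp add: Dm_def Rn_def)
qed

lemma Dm_recentre: "Dm n m (\<lambda>w. f (w + u) - f u) 0 v = Dm n m f u v"
proof -
  have "pd i (\<lambda>w. (f (w + u) - f u) j) 0 = pd i (\<lambda>y. f y j) u" for i j
    using pd_translate[of i "\<lambda>y. f y j" u "f u j"] by simp
  then show ?thesis
    by (intro ext) (simp add: Dm_def)
qed

lemma smooth_map_continuous_on:
  assumes "smooth_map n U m V f"
  shows "continuous_on U f"
proof (rule continuous_on_coordinatewise_then_product)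
  fix j
  show "continuous_on U (\<lambda>x. f x j)"
  proof (cases "j < m")
    case True
    then have "Ck n 0 U (\<lambda>x. f x j)"
      using assms unfolding smooth_map_def smooth_real_def by blast
    then show ?thesis
      by simp
  next
    case False
    then have "\<forall>x\<in>U. f x j = 0"
      using assms by (auto simp: smooth_map_def Rn_def)
    then show ?thesis
      using continuous_on_cong[of U U "\<lambda>x. f x j" "\<lambda>x. 0"] by simp
  qed
qed


section \<open>Topology of open subsets of \<open>R\<^sup>n\<close>\<close>

lemma path_connected_Rn_box:
  fixes y :: pt
  shows "path_connected {z \<in> Rn n. \<forall>i\<in>I. dist (z i) (y i) < e}" (is "path_connected ?B")
  unfolding path_connected_def
proof (intro ballI)
  fix a b assume a: "a \<in> ?B" and b: "b \<in> ?B"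
  define g where "g = (\<lambda>t::real. \<lambda>i. (1 - t) * a i + t * b i)"
  have "path g"
    unfolding path_def g_def by (intro continuous_on_coordinatewise_then_product continuous_intros)
  moreover have "path_image g \<subseteq> ?B"
  proof
    fix z assume "z \<in> path_image g"
    then obtain t where t: "0 \<le> t" "t \<le> 1" "z = g t"
      by (auto simp: path_image_def)
    have "z \<in> Rn n"
      using a b t by (auto simp: Rn_def g_def)
    moreover have "dist (z i) (y i) < e" if "i \<in> I" for i
    proof -
      have "z i - y i = (1 - t) * (a i - y i) + t * (b i - y i)"
        using t by (simp add: g_def algebra_simps)
      then have "\<bar>z i - y i\<bar> \<le> (1 - t) * \<bar>a i - y i\<bar> + t * \<bar>b i - y i\<bar>"
        using t by (metis abs_mult abs_of_nonneg abs_triangle_ineq diff_ge_0_iff_ge)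
      also have "\<dots> < e"
      proof (rule convex_bound_lt)
        show "\<bar>a i - y i\<bar> < e" "\<bar>b i - y i\<bar> < e"
          using a b that by (simp_all add: dist_real_def)
      qed (use t in simp_all)
      finally show ?thesis
        by (simp add: dist_real_def)
    qed
    ultimately show "z \<in> ?B"
      by auto
  qed
  moreover have "pathstart g = a" "pathfinish g = b"
    by (auto simp: pathstart_def pathfinish_def g_def)
  ultimately show "\<exists>g. path g \<and> path_image g \<subseteq> ?B \<and> pathstart g = a \<and> pathfinish g = b"
    by blast
qed

lemma open_Rn_box:
  fixes y :: pt
  assumes "finite I"
  shows "open_Rn n {z \<in> Rn n. \<forall>i\<in>I. dist (z i) (y i) < e}"
proof -
  have "open {f::pt. \<forall>i\<in>I. f (id i) \<in> ball (y i) e}"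
    by (rule product_topology_basis') (use assms in auto)
  moreover have "{z \<in> Rn n. \<forall>i\<in>I. dist (z i) (y i) < e} = Rn n \<inter> {f::pt. \<forall>i\<in>I. f (id i) \<in> ball (y i) e}"
    by (auto simp: dist_commute)
  ultimately show ?thesis
    unfolding open_Rn_def openin_open by blast
qed

text \<open>Basic opens of the product topology are boxes constraining finitely many coordinates,
  and their traces on \<open>R\<^sup>n\<close> are convex.\<close>

lemma open_Rn_locally_connected:
  assumes "open_Rn n U" "y \<in> U"
  obtains B where "open_Rn n B" "connected B" "y \<in> B" "B \<subseteq> U"
proof -
  obtain Ob where Ob: "open Ob" "U = Rn n \<inter> Ob"
    using assms(1) unfolding open_Rn_def openin_open by blast
  have "openin (product_topology (\<lambda>i. euclidean) UNIV) Ob" "y \<in> Ob"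
    using Ob assms(2) by (auto simp: open_fun_def)
  from product_topology_open_contains_basis[OF this]
  obtain Y where Y: "y \<in> (\<Pi>\<^sub>E i\<in>UNIV. Y i)" "\<And>i. open (Y i)" "finite {i. Y i \<noteq> UNIV}"
      "(\<Pi>\<^sub>E i\<in>UNIV. Y i) \<subseteq> Ob"
    by auto
  define I where "I = {i. Y i \<noteq> UNIV}"
  have fin: "finite I"
    using Y(3) by (simp add: I_def)
  have "\<exists>e>0. ball (y i) e \<subseteq> Y i" for i
    using Y(1,2) open_contains_ball by blast
  then obtain E where E: "\<And>i. E i > 0" "\<And>i. ball (y i) (E i) \<subseteq> Y i"
    by metis
  define e where "e = Min (insert 1 (E ` I))"
  have e0: "e > 0"
    unfolding e_def using fin E(1) by auto
  have eE: "i \<in> I \<Longrightarrow> e \<le> E i" for i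
    unfolding e_def using fin by auto
  define B where "B = {z \<in> Rn n. \<forall>i\<in>I. dist (z i) (y i) < e}"
  have "B \<subseteq> U"
  proof
    fix z assume z: "z \<in> B"
    have "z i \<in> Y i" for i
    proof (cases "i \<in> I")
      case True
      then have "dist (y i) (z i) < E i"
        using z eE[OF True] by (auto simp: B_def dist_commute)
      then show ?thesis
        using E(2)[of i] by auto
    qed (auto simp: I_def)
    then have "z \<in> Ob"
      using Y(4) by auto
    then show "z \<in> U"
      using z Ob by (auto simp: B_def)
  qed
  moreover have "y \<in> B"
    using e0 assms Ob by (auto simp: B_def)
  moreover have "open_Rn n B"
    unfolding B_def by (rule open_Rn_box[OF fin])
  moreover have "connected B"
    unfolding B_def by (rule path_connected_imp_connected[OF path_connected_Rn_box])
  ultimately show ?thesis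
    using that by blast
qed

lemma open_Rn_connected_component:
  assumes "open_Rn n U"
  shows "open_Rn n (connected_component_set U u)"
  unfolding open_Rn_def
proof (subst openin_subopen, intro ballI)
  fix y assume y: "y \<in> connected_component_set U u"
  then have "y \<in> U"
    using connected_component_subset by blast
  then obtain B where B: "open_Rn n B" "connected B" "y \<in> B" "B \<subseteq> U"
    using open_Rn_locally_connected[OF assms] by blast
  have "B \<subseteq> connected_component_set U y"
    by (rule connected_component_maximal) (use B in auto)
  also have "\<dots> = connected_component_set U u"
    using connected_component_eq[OF y] .
  finally show "\<exists>T. openin (top_of_set (Rn n)) T \<and> y \<in> T \<and> T \<subseteq> connected_component_set U u"
    using B unfolding open_Rn_def by blast
qed

lemma image_diff_translation_iff:
  fixes u :: pt
  shows "w \<in> (\<lambda>w. w - u) ` C \<longleftrightarrow> w + u \<in> C"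
proof
  assume "w + u \<in> C"
  then have "(w + u) - u \<in> (\<lambda>w. w - u) ` C"
    by blast
  then show "w \<in> (\<lambda>w. w - u) ` C"
    by simp
qed auto

lemma open_Rn_translate:
  assumes "open_Rn n C" "u \<in> Rn n"
  shows "open_Rn n ((\<lambda>w. w - u) ` C)"
proof -
  obtain Ob where Ob: "open Ob" "C = Rn n \<inter> Ob"
    using assms(1) unfolding open_Rn_def openin_open by blast
  have "open ((\<lambda>w. w + u) -` Ob)"
    using continuous_on_translation[of UNIV u] Ob(1) continuous_on_open_vimage[of UNIV "\<lambda>w. w + u"]
    by simp
  moreover have "(\<lambda>w. w - u) ` C = Rn n \<inter> (\<lambda>w. w + u) -` Ob"
    using Ob assms(2) by (auto simp: image_diff_translation_iff Rn_add Rn_diff dest: Rn_diff[of _ n u])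
  ultimately show ?thesis
    unfolding open_Rn_def openin_open by auto
qed

lemma connected_component_image:
  assumes f: "smooth_map n U m V f" and u: "u \<in> U"
  shows "f ` connected_component_set U u \<subseteq> connected_component_set V (f u)"
proof (rule connected_component_maximal)
  show "f u \<in> f ` connected_component_set U u"
    using u by simp
  show "connected (f ` connected_component_set U u)"
    by (rule connected_continuous_image)
      (auto intro: continuous_on_subset[OF smooth_map_continuous_on[OF f] connected_component_subset])
  show "f ` connected_component_set U u \<subseteq> V"
    using smooth_map_image[OF f] connected_component_subset by blast
qed


lemma diffeologyI:
  assumes "\<And>n U p. D n U p \<Longrightarrow> open_Rn n U \<and> p ` U \<subseteq> X"
    and "\<And>n U x. open_Rn n U \<Longrightarrow> x \<in> X \<Longrightarrow> D n U (\<lambda>_. x)"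
    and "\<And>n U p m W f. D n U p \<Longrightarrow> open_Rn m W \<Longrightarrow> smooth_map m W n U f \<Longrightarrow> D m W (p \<circ> f)"
    and "\<And>n U p. open_Rn n U \<Longrightarrow> p ` U \<subseteq> X \<Longrightarrow>
        (\<forall>u\<in>U. \<exists>W. open_Rn n W \<and> u \<in> W \<and> W \<subseteq> U \<and> D n W p) \<Longrightarrow> D n U p"
    and "\<And>n U p q. D n U p \<Longrightarrow> (\<forall>u\<in>U. p u = q u) \<Longrightarrow> D n U q"
  shows "diffeology X D"
  using assms unfolding diffeology_def by meson

lemma diffeologyD:
  assumes "diffeology X D"
  shows diffeology_plot_domain: "\<And>n U p. D n U p \<Longrightarrow> open_Rn n U \<and> p ` U \<subseteq> X"
    and diffeology_const: "\<And>n U x. open_Rn n U \<Longrightarrow> x \<in> X \<Longrightarrow> D n U (\<lambda>_. x)"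
    and diffeology_comp: "\<And>n U p m W f. D n U p \<Longrightarrow> open_Rn m W \<Longrightarrow> smooth_map m W n U f \<Longrightarrow> D m W (p \<circ> f)"
    and diffeology_local: "\<And>n U p. open_Rn n U \<Longrightarrow> p ` U \<subseteq> X \<Longrightarrow>
        (\<forall>u\<in>U. \<exists>W. open_Rn n W \<and> u \<in> W \<and> W \<subseteq> U \<and> D n W p) \<Longrightarrow> D n U p"
    and diffeology_cong: "\<And>n U p q. D n U p \<Longrightarrow> (\<forall>u\<in>U. p u = q u) \<Longrightarrow> D n U q"
  using assms unfolding diffeology_def by meson+

definition pullback_dfg :: "'b set \<Rightarrow> ('b \<Rightarrow> 'c) \<Rightarrow> 'c dfg \<Rightarrow> 'b dfg" where
  "pullback_dfg S f DY k V q \<longleftrightarrow> open_Rn k V \<and> q ` V \<subseteq> S \<and> DY k V (f \<circ> q)"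

lemma diffeology_pullback:
  assumes DY: "diffeology Y DY" and fS: "f ` S \<subseteq> Y"
  shows "diffeology S (pullback_dfg S f DY)"
proof (rule diffeologyI)
  show "pullback_dfg S f DY n U (\<lambda>_. x)" if "open_Rn n U" "x \<in> S" for n U x
    using diffeology_const[OF DY that(1), of "f x"] that fS by (auto simp: pullback_dfg_def o_def)
  show "pullback_dfg S f DY m W (p \<circ> g)"
    if "pullback_dfg S f DY n U p" "open_Rn m W" "smooth_map m W n U g" for n U p m W g
    using diffeology_comp[OF DY, of n U "f \<circ> p" m W g] smooth_map_image[OF that(3)] that
    by (fastforce simp: pullback_dfg_def o_assoc)
  show "pullback_dfg S f DY n U p" if "open_Rn n U" "p ` U \<subseteq> S"
    "\<forall>u\<in>U. \<exists>W. open_Rn n W \<and> u \<in> W \<and> W \<subseteq> U \<and> pullback_dfg S f DY n W p" for n U p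
  proof -
    have "(f \<circ> p) ` U \<subseteq> Y"
      using that(2) fS by auto
    then have "DY n U (f \<circ> p)"
      by (rule diffeology_local[OF DY that(1)]) (use that(3) in \<open>auto simp: pullback_dfg_def\<close>)
    then show ?thesis
      using that by (simp add: pullback_dfg_def)
  qed
  show "pullback_dfg S f DY n U q" if "pullback_dfg S f DY n U p" "\<forall>u\<in>U. p u = q u" for n U p q
    using that diffeology_cong[OF DY, of n U "f \<circ> p" "f \<circ> q"] by (auto simp: pullback_dfg_def)
qed (simp add: pullback_dfg_def)

lemma diffeology_inter:
  assumes D1: "diffeology S D1" and D2: "diffeology S D2"
  shows "diffeology S (\<lambda>k V q. D1 k V q \<and> D2 k V q)"
proof (rule diffeologyI)
  show "open_Rn n U \<and> p ` U \<subseteq> S" if "D1 n U p \<and> D2 n U p" for n U p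
    using diffeology_plot_domain[OF D1] that by blast
  show "D1 n U (\<lambda>_. x) \<and> D2 n U (\<lambda>_. x)" if "open_Rn n U" "x \<in> S" for n U x
    using diffeology_const[OF D1 that] diffeology_const[OF D2 that] by blast
  show "D1 m W (p \<circ> f) \<and> D2 m W (p \<circ> f)"
    if "D1 n U p \<and> D2 n U p" "open_Rn m W" "smooth_map m W n U f" for n U p m W f
    using diffeology_comp[OF D1 _ that(2,3)] diffeology_comp[OF D2 _ that(2,3)] that(1) by blast
  show "D1 n U p \<and> D2 n U p" if "open_Rn n U" "p ` U \<subseteq> S"
    "\<forall>u\<in>U. \<exists>W. open_Rn n W \<and> u \<in> W \<and> W \<subseteq> U \<and> D1 n W p \<and> D2 n W p" for n U p
    using diffeology_local[OF D1 that(1,2)] diffeology_local[OF D2 that(1,2)] that(3) by blast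
  show "D1 n U q \<and> D2 n U q" if "D1 n U p \<and> D2 n U p" "\<forall>u\<in>U. p u = q u" for n U p q
    using diffeology_cong[OF D1 _ that(2)] diffeology_cong[OF D2 _ that(2)] that(1) by blast
qed

lemma diffeology_Inf:
  assumes D: "\<And>D. P D \<Longrightarrow> diffeology S D" and "P D0"
  shows "diffeology S (\<lambda>k V q. \<forall>D. P D \<longrightarrow> D k V q)"
proof (rule diffeologyI)
  show "open_Rn n U \<and> p ` U \<subseteq> S" if "\<forall>D. P D \<longrightarrow> D n U p" for n U p
    using diffeology_plot_domain[OF D[OF assms(2)]] that assms(2) by blast
  show "\<forall>D. P D \<longrightarrow> D n U (\<lambda>_. x)" if "open_Rn n U" "x \<in> S" for n U x
    using diffeology_const[OF D that] by blast
  show "\<forall>D. P D \<longrightarrow> D m W (p \<circ> f)"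
    if "\<forall>D. P D \<longrightarrow> D n U p" "open_Rn m W" "smooth_map m W n U f" for n U p m W f
    using diffeology_comp[OF D _ that(2,3)] that(1) by blast
  show "\<forall>D. P D \<longrightarrow> D n U p" if "open_Rn n U" "p ` U \<subseteq> S"
    "\<forall>u\<in>U. \<exists>W. open_Rn n W \<and> u \<in> W \<and> W \<subseteq> U \<and> (\<forall>D. P D \<longrightarrow> D n W p)" for n U p
    using diffeology_local[OF D that(1,2)] that(3) by blast
  show "\<forall>D. P D \<longrightarrow> D n U q" if "\<forall>D. P D \<longrightarrow> D n U p" "\<forall>u\<in>U. p u = q u" for n U p q
    using diffeology_cong[OF D _ that(2)] that(1) by blast
qed

section \<open>The internal tangent spaces\<close>

text \<open>Via the pointwise group structure on functions, the finitely supported families of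
  \<open>FS DX x\<close> form an abelian group, and \<open>Nsp DX x\<close> is the subgroup spanned by the relations.\<close>

lemma fun_add_pointwise: "(\<lambda>k i. a k i + b k i) = a + b"
  by (simp add: fun_eq_iff)

lemma fun_diff_pointwise: "(\<lambda>k i. a k i - b k i) = a - b"
  by (simp add: fun_eq_iff)

definition scale_fam :: "real \<Rightarrow> ('k \<Rightarrow> pt) \<Rightarrow> 'k \<Rightarrow> pt" where
  "scale_fam r s = (\<lambda>k i. r * s k i)"

lemma scale_fam_apply [simp]: "scale_fam r s k i = r * s k i"
  by (simp add: scale_fam_def)

lemma scale_fam_minus_one: "scale_fam (- 1) s = - s"
  by (simp add: fun_eq_iff)

lemma inj_apply: "Defs.inj j v k = (if k = j then v else 0)"
  by (simp add: Defs.inj_def)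

lemma inj_add: "Defs.inj j (v + w) = Defs.inj j v + Defs.inj j w"
  by (simp add: fun_eq_iff inj_apply)

lemma inj_scale: "Defs.inj j (\<lambda>i. r * v i) = scale_fam r (Defs.inj j v)"
  by (simp add: fun_eq_iff inj_apply)

lemma FS_iff:
  "s \<in> FS DX x \<longleftrightarrow> finite {j. s j \<noteq> 0} \<and> (\<forall>j. s j \<noteq> 0 \<longrightarrow> j \<in> Jx DX x) \<and> (\<forall>j. s j \<in> Rn (fst j))"
  unfolding FS_def by (auto simp: split: prod.splits) (metis zero_in_Rn)

lemma FS_value: "s \<in> FS DX x \<Longrightarrow> s j \<in> Rn (fst j)"
  unfolding FS_iff by blast

lemma FS_support_Jx: "s \<in> FS DX x \<Longrightarrow> s j \<noteq> 0 \<Longrightarrow> j \<in> Jx DX x"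
  unfolding FS_iff by blast

lemma FS_finite_support: "s \<in> FS DX x \<Longrightarrow> finite {j. s j \<noteq> 0}"
  unfolding FS_iff by blast

lemma FS_add:
  assumes "s \<in> FS DX x" and "t \<in> FS DX x"
  shows "s + t \<in> FS DX x"
proof -
  have "{j. (s + t) j \<noteq> 0} \<subseteq> {j. s j \<noteq> 0} \<union> {j. t j \<noteq> 0}"
    by auto
  then show ?thesis
    using assms by (auto simp: FS_iff Rn_add intro: finite_subset)
qed

lemma FS_scale:
  assumes "s \<in> FS DX x"
  shows "scale_fam r s \<in> FS DX x"
proof -
  have "{j. scale_fam r s j \<noteq> 0} \<subseteq> {j. s j \<noteq> 0}"
    by (auto simp: fun_eq_iff)
  moreover have "scale_fam r s j = (\<lambda>i. r * s j i)" for j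
    by (simp add: fun_eq_iff)
  ultimately show ?thesis
    using assms by (auto simp: FS_iff Rn_scale intro: finite_subset)
qed

lemma FS_diff:
  assumes "s \<in> FS DX x" and "t \<in> FS DX x"
  shows "s - t \<in> FS DX x"
proof -
  have "s + scale_fam (-1) t \<in> FS DX x"
    by (intro FS_add FS_scale assms)
  then show ?thesis
    by (simp add: scale_fam_minus_one)
qed

lemma FS_zero: "0 \<in> FS DX x"
  by (simp add: FS_iff)

lemma FS_inj:
  assumes "j \<in> Jx DX x" and "v \<in> Rn (fst j)"
  shows "Defs.inj j v \<in> FS DX x"
proof -
  have "{k. Defs.inj j v k \<noteq> 0} \<subseteq> {j}"
    by (auto simp: inj_apply)
  then have "finite {k. Defs.inj j v k \<noteq> 0}"
    by (rule finite_subset) simp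
  moreover have "Defs.inj j v k \<in> Rn (fst k)" for k
    using assms(2) by (simp add: inj_apply)
  ultimately show ?thesis
    using assms(1) unfolding FS_iff by (simp add: inj_apply)
qed

lemma Nsp_add: "a \<in> Nsp DX x \<Longrightarrow> b \<in> Nsp DX x \<Longrightarrow> a + b \<in> Nsp DX x"
  unfolding fun_add_pointwise[symmetric] by (rule Nadd)

lemma Nsp_scale: "a \<in> Nsp DX x \<Longrightarrow> scale_fam r a \<in> Nsp DX x"
  unfolding scale_fam_def by (rule Nsmul)

lemma Nsp_diff:
  assumes "a \<in> Nsp DX x" and "b \<in> Nsp DX x"
  shows "a - b \<in> Nsp DX x"
proof -
  have "a + scale_fam (-1) b \<in> Nsp DX x"
    by (intro Nsp_add Nsp_scale assms)
  then show ?thesis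
    by (simp add: scale_fam_minus_one)
qed

lemma Nsp_zero: "0 \<in> Nsp DX x"
  unfolding zero_fun_def by (rule N0)

lemma Nsp_generator:
  "j \<in> Jx DX x \<Longrightarrow> j' \<in> Jx DX x \<Longrightarrow> f \<in> Jmor j j' \<Longrightarrow> v \<in> Rn (fst j) \<Longrightarrow>
    Defs.inj j' (Dm (fst j) (fst j') f 0 v) - Defs.inj j v \<in> Nsp DX x"
  unfolding fun_diff_pointwise[symmetric] zv_eq_0[symmetric] by (rule Ngen)

lemma Nsp_subset_FS: "a \<in> Nsp DX x \<Longrightarrow> a \<in> FS DX x"
proof (induction rule: Nsp.induct)
  case N0
  show ?case
    using FS_zero unfolding zero_fun_def .
next
  case (Ngen j j' f v)
  then show ?case
    unfolding fun_diff_pointwise[of "Defs.inj j' _" "Defs.inj j v"] by (intro FS_diff FS_inj Dm_in_Rn)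
next
  case (Nadd a b)
  show ?case
    unfolding fun_add_pointwise[of a b] using Nadd.IH by (rule FS_add)
next
  case (Nsmul a r)
  show ?case
    unfolding scale_fam_def[of r a, symmetric] using Nsmul.IH by (rule FS_scale)
qed

lemma cls_iff: "s' \<in> cls DX x s \<longleftrightarrow> s' \<in> FS DX x \<and> s' - s \<in> Nsp DX x"
  by (simp add: cls_def fun_diff_pointwise[of s' s])

lemma cls_eqI:
  assumes "s - t \<in> Nsp DX x"
  shows "cls DX x s = cls DX x t"
proof -
  have "s' - s \<in> Nsp DX x \<longleftrightarrow> s' - t \<in> Nsp DX x" for s'
  proof
    assume "s' - s \<in> Nsp DX x"
    then have "(s' - s) + (s - t) \<in> Nsp DX x"
      using assms by (rule Nsp_add)
    then show "s' - t \<in> Nsp DX x"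
      by simp
  next
    assume "s' - t \<in> Nsp DX x"
    then have "(s' - t) - (s - t) \<in> Nsp DX x"
      using assms by (rule Nsp_diff)
    then show "s' - s \<in> Nsp DX x"
      by simp
  qed
  then show ?thesis
    by (auto simp: cls_iff)
qed

lemma rep_cls:
  assumes "s \<in> FS DX x"
  shows "rep (cls DX x s) \<in> FS DX x" and "rep (cls DX x s) - s \<in> Nsp DX x"
proof -
  have "s \<in> cls DX x s"
    using assms Nsp_zero by (simp add: cls_iff)
  then have "rep (cls DX x s) \<in> cls DX x s"
    unfolding rep_def by (rule someI[where P = "\<lambda>s'. s' \<in> cls DX x s"])
  then show "rep (cls DX x s) \<in> FS DX x" and "rep (cls DX x s) - s \<in> Nsp DX x"
    by (simp_all add: cls_iff)
qed

lemma tx_add_cls: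
  assumes "s \<in> FS DX x" and "t \<in> FS DX x"
  shows "tx_add DX (x, cls DX x s) (x, cls DX x t) = (x, cls DX x (s + t))"
proof -
  let ?r = "rep (cls DX x s)" and ?r' = "rep (cls DX x t)"
  have "(?r + ?r') - (s + t) = (?r - s) + (?r' - t)"
    by (simp add: algebra_simps)
  also have "\<dots> \<in> Nsp DX x"
    by (intro Nsp_add rep_cls assms)
  finally have "cls DX x (?r + ?r') = cls DX x (s + t)"
    by (rule cls_eqI)
  then show ?thesis
    by (simp add: tx_add_def fun_add_pointwise[of "rep (cls DX x s)" "rep (cls DX x t)"])
qed

lemma tx_smul_cls:
  assumes "s \<in> FS DX x"
  shows "tx_smul DX r (x, cls DX x s) = (x, cls DX x (scale_fam r s))"
proof -
  let ?r = "rep (cls DX x s)"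
  have "scale_fam r ?r - scale_fam r s = scale_fam r (?r - s)"
    by (simp add: fun_eq_iff algebra_simps)
  also have "\<dots> \<in> Nsp DX x"
    by (intro Nsp_scale rep_cls assms)
  finally have "cls DX x (scale_fam r ?r) = cls DX x (scale_fam r s)"
    by (rule cls_eqI)
  then show ?thesis
    by (simp add: tx_smul_def scale_fam_def[of r "rep (cls DX x s)", symmetric])
qed

lemma tx_zero_cls: "tx_zero DX x = (x, cls DX x 0)"
  unfolding tx_zero_def zero_fun_def ..

lemma TXset_iff: "v \<in> TXset X DX \<longleftrightarrow> fst v \<in> X \<and> (\<exists>s\<in>FS DX (fst v). snd v = cls DX (fst v) s)"
  by (cases v) (auto simp: TXset_def Tsp_def)

lemma TX_with_simps [simp]:
  "vs_tot (TX_with X DX D) = TXset X DX" "vs_totD (TX_with X DX D) = D"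
  "vs_bas (TX_with X DX D) = X" "vs_basD (TX_with X DX D) = DX"
  "vs_prj (TX_with X DX D) = fst" "vs_add (TX_with X DX D) = tx_add DX"
  "vs_smul (TX_with X DX D) = tx_smul DX" "vs_zero (TX_with X DX D) = tx_zero DX"
  by (simp_all add: TX_with_def)

lemma fib_TX_with_iff:
  "x \<in> X \<Longrightarrow> v \<in> fib (TX_with X DX D) x \<longleftrightarrow> (\<exists>s\<in>FS DX x. v = (x, cls DX x s))"
  by (cases v) (auto simp: fib_def TXset_iff)

lemma scale_fam_one: "scale_fam 1 s = s"
  and scale_fam_scale_fam: "scale_fam r (scale_fam q s) = scale_fam (r * q) s"
  and scale_fam_add_scalar: "scale_fam (r + q) s = scale_fam r s + scale_fam q s"
  and scale_fam_add: "scale_fam r (s + t) = scale_fam r s + scale_fam r t"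
  by (simp_all add: fun_eq_iff algebra_simps)

lemma cls_in_fib: "x \<in> X \<Longrightarrow> s \<in> FS DX x \<Longrightarrow> (x, cls DX x s) \<in> fib (TX_with X DX D) x"
  by (auto simp: fib_TX_with_iff)

lemma fib_TX_withE:
  assumes "v \<in> fib (TX_with X DX D) x" and "x \<in> X"
  obtains s where "s \<in> FS DX x" and "v = (x, cls DX x s)"
  using assms by (auto simp: fib_TX_with_iff)

lemma fibre_vs_TX_with: "fibre_vs (TX_with X DX D)"
  unfolding fibre_vs_def
proof (intro ballI conjI allI)
  fix x assume "x \<in> vs_bas (TX_with X DX D)"
  then have x: "x \<in> X"
    by simp
  let ?F = "fib (TX_with X DX D) x" and ?add = "vs_add (TX_with X DX D)"
    and ?smul = "vs_smul (TX_with X DX D)" and ?zero = "vs_zero (TX_with X DX D) x"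
  note fibE = fib_TX_withE[OF _ x] and fibI = cls_in_fib[OF x]
  note ops = tx_add_cls tx_smul_cls tx_zero_cls
  show "?zero \<in> ?F"
    by (auto simp: ops intro!: fibI FS_zero)
  show "?add v w \<in> ?F" if "v \<in> ?F" "w \<in> ?F" for v w
    using that by (auto elim!: fibE simp: ops intro!: fibI FS_add)
  show "?smul a v \<in> ?F" if "v \<in> ?F" for a v
    using that by (auto elim!: fibE simp: ops intro!: fibI FS_scale)
  show "?add (?add u v) w = ?add u (?add v w)" if "u \<in> ?F" "v \<in> ?F" "w \<in> ?F" for u v w
    using that by (auto elim!: fibE simp: ops FS_add add.assoc)
  show "?add v w = ?add w v" if "v \<in> ?F" "w \<in> ?F" for v w
    using that by (auto elim!: fibE simp: ops add.commute)
  show "?add v ?zero = v" if "v \<in> ?F" for v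
    using that by (auto elim!: fibE simp: ops FS_zero)
  show "\<exists>w\<in>?F. ?add v w = ?zero" if v: "v \<in> ?F" for v
  proof -
    obtain s where s: "s \<in> FS DX x" "v = (x, cls DX x s)"
      using v by (rule fibE)
    have "(x, cls DX x (scale_fam (-1) s)) \<in> ?F"
      by (intro fibI FS_scale s(1))
    moreover have "?add v (x, cls DX x (scale_fam (-1) s)) = ?zero"
      using s FS_scale[OF s(1), of "-1"] by (simp add: ops scale_fam_minus_one)
    ultimately show ?thesis
      by blast
  qed
  show "?smul 1 v = v" if "v \<in> ?F" for v
    using that by (auto elim!: fibE simp: ops scale_fam_one)
  show "?smul a (?smul b v) = ?smul (a * b) v" if "v \<in> ?F" for a b v
    using that by (auto elim!: fibE simp: ops FS_scale scale_fam_scale_fam)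
  show "?smul (a + b) v = ?add (?smul a v) (?smul b v)" if "v \<in> ?F" for a b v
    using that by (auto elim!: fibE simp: ops FS_scale scale_fam_add_scalar)
  show "?smul a (?add v w) = ?add (?smul a v) (?smul a w)" if "v \<in> ?F" "w \<in> ?F" for a v w
    using that by (auto elim!: fibE simp: ops FS_add FS_scale scale_fam_add)
qed

lemma tx_add_in_TXset:
  assumes "a \<in> TXset X DX" and "b \<in> TXset X DX" and "fst a = fst b"
  shows "tx_add DX a b \<in> TXset X DX"
proof -
  obtain s t where "fst a \<in> X" "s \<in> FS DX (fst a)" "t \<in> FS DX (fst a)"
    and "a = (fst a, cls DX (fst a) s)" "b = (fst a, cls DX (fst a) t)"
    using assms by (metis TXset_iff prod.collapse)
  then show ?thesis
    by (metis FS_add TXset_iff fst_conv snd_conv tx_add_cls)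
qed


text \<open>\<open>T\<^sub>u U\<close> is identified with \<open>T\<^sub>0\<close> of the plot \<open>w \<mapsto> p (w + u)\<close> restricted to the translate
  of the connected component of \<open>u\<close>; this is the plot indexing \<open>Tleg DX (n, U, p) (u, v)\<close>.\<close>

definition recentre :: "'a plot \<Rightarrow> pt \<Rightarrow> 'a plot" where
  "recentre j u = (case j of (n, U, p) \<Rightarrow>
     (n, (\<lambda>w. w - u) ` connected_component_set U u, \<lambda>w. p (w + u)))"

lemma Tleg_eq: "Tleg DX (n, U, p) (u, v) = (p u, cls DX (p u) (Defs.inj (recentre (n, U, p) u) v))"
  by (simp add: Tleg_def recentre_def fun_diff_def plus_fun_def)

lemma Tleg_fst: "fst (Tleg DX (n, U, p) z) = p (fst z)"
  by (cases z) (simp add: Tleg_eq)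

lemma recentre_centred:
  assumes "(n, U, p) \<in> Jx DX x"
  shows "recentre (n, U, p) 0 = (n, U, p)"
proof -
  have "connected U" "0 \<in> U"
    using assms by (simp_all add: Jx_def)
  then show ?thesis
    by (simp add: recentre_def connected_component_eq_self)
qed

lemma
  assumes X: "diffeology X DX" and p: "DX n U p" and u: "u \<in> U"
  shows recentre_plot: "recentre (n, U, p) u \<in> plots DX"
    and recentre_in_Jx: "recentre (n, U, p) u \<in> Jx DX (p u)"
    and translation_in_dsx_mor: "(\<lambda>w. w + u) \<in> dsx_mor (recentre (n, U, p) u) (n, U, p)"
proof -
  define C where "C = connected_component_set U u"
  have U: "open_Rn n U"
    using diffeology_plot_domain[OF X p] by blast
  have CU: "C \<subseteq> U"
    unfolding C_def by (rule connected_component_subset)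
  have open_dom: "open_Rn n ((\<lambda>w. w - u) ` C)"
    unfolding C_def
    by (rule open_Rn_translate[OF open_Rn_connected_component[OF U]]) (use u open_Rn_subset[OF U] in blast)
  have sm: "smooth_map n ((\<lambda>w. w - u) ` C) n U (\<lambda>w. w + u)"
    by (rule smooth_map_translation) (use CU open_Rn_subset[OF U] in \<open>auto simp: image_diff_translation_iff\<close>)
  have plot: "DX n ((\<lambda>w. w - u) ` C) (\<lambda>w. p (w + u))"
    using diffeology_comp[OF X p open_dom sm] by (simp add: o_def)
  then show "recentre (n, U, p) u \<in> plots DX"
    by (simp add: plots_def recentre_def C_def)
  have "connected ((\<lambda>w. w - u) ` C)"
    unfolding C_def by (rule connected_continuous_image[OF continuous_on_translation_diff]) simp
  moreover have "0 \<in> (\<lambda>w. w - u) ` C"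
    using u by (auto simp: image_diff_translation_iff C_def)
  ultimately show "recentre (n, U, p) u \<in> Jx DX (p u)"
    using plot by (simp add: Jx_def recentre_def C_def)
  show "(\<lambda>w. w + u) \<in> dsx_mor (recentre (n, U, p) u) (n, U, p)"
    using sm by (simp add: dsx_mor_def recentre_def C_def)
qed

lemma inj_recentre_in_FS:
  assumes "diffeology X DX" and "DX n U p" and "u \<in> U" and "v \<in> Rn n"
  shows "Defs.inj (recentre (n, U, p) u) v \<in> FS DX (p u)"
  using assms by (intro FS_inj recentre_in_Jx) (simp_all add: recentre_def)

lemma Tleg_in_TXset:
  assumes X: "diffeology X DX" and p: "DX n U p" and u: "u \<in> U" and v: "v \<in> Rn n"
  shows "Tleg DX (n, U, p) (u, v) \<in> TXset X DX"
proof -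
  have "p u \<in> X"
    using diffeology_plot_domain[OF X p] u by blast
  then show ?thesis
    using inj_recentre_in_FS[OF X p u v] by (auto simp: TXset_iff Tleg_eq)
qed

text \<open>Naturality of \<open>Tp\<close>: a morphism \<open>f\<close> of plots yields, after recentring at \<open>u\<close> and \<open>f u\<close>,
  a morphism of centred plots, and the resulting relation of \<open>Nsp\<close> identifies the two classes.\<close>

lemma Tleg_Tmap:
  assumes X: "diffeology X DX" and p: "DX n U p" and q: "DX m V q"
    and f: "f \<in> dsx_mor (n, U, p) (m, V, q)" and u: "u \<in> U" and v: "v \<in> Rn n"
  shows "Tleg DX (m, V, q) (Tmap n m f (u, v)) = Tleg DX (n, U, p) (u, v)"
proof -
  have fs: "smooth_map n U m V f" and fq: "\<And>w. w \<in> U \<Longrightarrow> q (f w) = p w"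
    using f by (auto simp: dsx_mor_def)
  have fu: "f u \<in> V"
    using smooth_map_image[OF fs] u by auto
  define C where "C = connected_component_set U u"
  define C' where "C' = connected_component_set V (f u)"
  define F where "F = (\<lambda>w. f (w + u) - f u)"
  let ?J = "recentre (n, U, p) u" and ?J' = "recentre (m, V, q) (f u)"
  have CU: "C \<subseteq> U"
    unfolding C_def by (rule connected_component_subset)
  have fC: "f ` C \<subseteq> C'"
    unfolding C_def C'_def by (rule connected_component_image[OF fs u])
  have J: "?J \<in> Jx DX (p u)"
    by (rule recentre_in_Jx[OF X p u])
  have J': "?J' \<in> Jx DX (p u)"
    using recentre_in_Jx[OF X q fu] fq[OF u] by simp
  have "smooth_map n ((\<lambda>w. w - u) ` C) m ((\<lambda>w. w - f u) ` C') F"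
    unfolding F_def
  proof (rule smooth_map_recentre[OF fs u])
    fix w assume "w \<in> (\<lambda>w. w - u) ` C"
    then show "w + u \<in> U \<and> f (w + u) - f u \<in> (\<lambda>w. w - f u) ` C'"
      using CU fC by (auto simp: image_diff_translation_iff)
  qed
  moreover have "\<forall>w\<in>C. q (f w) = p w"
    using CU fq by blast
  ultimately have F: "F \<in> Jmor ?J ?J'"
    by (simp add: Jmor_def recentre_def C_def C'_def F_def)
  have "Defs.inj ?J' (Dm (fst ?J) (fst ?J') F 0 v) - Defs.inj ?J v \<in> Nsp DX (p u)"
    using v by (intro Nsp_generator[OF J J' F]) (simp add: recentre_def)
  moreover have "Dm (fst ?J) (fst ?J') F 0 v = Dm n m f u v"
    by (simp add: recentre_def F_def Dm_recentre)
  ultimately show ?thesis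
    using cls_eqI fq[OF u] by (simp add: Tleg_eq Tmap_def)
qed

lemma Tleg_centred:
  assumes "j \<in> Jx DX x"
  shows "Tleg DX j (0, v) = (x, cls DX x (Defs.inj j v))"
  using assms recentre_centred[of _ _ _ DX x] by (cases j) (simp add: Tleg_eq Jx_def)

lemma Tleg_add:
  assumes X: "diffeology X DX" and p: "DX n U p" and u: "u \<in> U"
    and v: "v \<in> Rn n" and w: "w \<in> Rn n"
  shows "Tleg DX (n, U, p) (u, v + w) = tx_add DX (Tleg DX (n, U, p) (u, v)) (Tleg DX (n, U, p) (u, w))"
  using inj_recentre_in_FS[OF X p u v] inj_recentre_in_FS[OF X p u w]
  by (simp add: Tleg_eq tx_add_cls inj_add)

lemma Tleg_scale:
  assumes X: "diffeology X DX" and p: "DX n U p" and u: "u \<in> U" and v: "v \<in> Rn n"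
  shows "Tleg DX (n, U, p) (u, \<lambda>i. r * v i) = tx_smul DX r (Tleg DX (n, U, p) (u, v))"
  using inj_recentre_in_FS[OF X p u v] by (simp add: Tleg_eq tx_smul_cls inj_scale)

section \<open>The diffeologies on \<open>TX\<close>\<close>

text \<open>All diffeologies on \<open>TX\<close> considered below are contained in this one.\<close>

definition proj_dfg :: "'a set \<Rightarrow> 'a dfg \<Rightarrow> 'a tx dfg" where
  "proj_dfg X DX = pullback_dfg (TXset X DX) fst DX"

lemma proj_dfg_iff:
  "proj_dfg X DX k V q \<longleftrightarrow> open_Rn k V \<and> q ` V \<subseteq> TXset X DX \<and> DX k V (fst \<circ> q)"
  by (simp add: proj_dfg_def pullback_dfg_def)

lemma fst_TXset: "fst ` TXset X DX \<subseteq> X"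
  by (auto simp: TXset_iff)

lemma diffeology_proj_dfg: "diffeology X DX \<Longrightarrow> diffeology (TXset X DX) (proj_dfg X DX)"
  unfolding proj_dfg_def by (rule diffeology_pullback[OF _ fst_TXset])

lemma tx_smul_in_TXset:
  assumes "a \<in> TXset X DX"
  shows "tx_smul DX r a \<in> TXset X DX"
proof -
  obtain s where "fst a \<in> X" "s \<in> FS DX (fst a)" and "a = (fst a, cls DX (fst a) s)"
    using assms by (metis TXset_iff prod.collapse)
  then show ?thesis
    by (metis FS_scale TXset_iff fst_conv snd_conv tx_smul_cls)
qed

lemma tx_zero_in_TXset: "x \<in> X \<Longrightarrow> tx_zero DX x \<in> TXset X DX"
  by (auto simp: TXset_iff tx_zero_cls intro!: bexI[of _ 0] FS_zero)

lemma is_vsd_TX_withI: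
  assumes X: "diffeology X DX" and D: "diffeology (TXset X DX) D"
    and le: "\<And>k V q. D k V q \<Longrightarrow> proj_dfg X DX k V q"
  shows "is_vsd (TX_with X DX D)"
  using X D fst_TXset[of X DX] le by (auto simp: is_vsd_def dsmooth_def proj_dfg_iff fibre_vs_TX_with)

lemma is_dvs_proj_dfg:
  assumes X: "diffeology X DX"
  shows "is_dvs (TX_with X DX (proj_dfg X DX))"
  unfolding is_dvs_def
proof (intro conjI allI impI)
  show "is_vsd (TX_with X DX (proj_dfg X DX))"
    by (rule is_vsd_TX_withI[OF X diffeology_proj_dfg[OF X]])
  fix n U
  show "vs_totD (TX_with X DX (proj_dfg X DX)) n U (\<lambda>u. vs_add (TX_with X DX (proj_dfg X DX)) (a u) (b u))"
    if "vs_totD (TX_with X DX (proj_dfg X DX)) n U a \<and> vs_totD (TX_with X DX (proj_dfg X DX)) n U b \<and>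
      (\<forall>u\<in>U. vs_prj (TX_with X DX (proj_dfg X DX)) (a u) = vs_prj (TX_with X DX (proj_dfg X DX)) (b u))"
    for a b
  proof -
    have "fst \<circ> (\<lambda>u. tx_add DX (a u) (b u)) = fst \<circ> a"
      by (simp add: o_def tx_add_def)
    then show ?thesis
      using that by (auto simp: proj_dfg_iff image_subset_iff intro!: tx_add_in_TXset)
  qed
  show "vs_totD (TX_with X DX (proj_dfg X DX)) n U (\<lambda>u. vs_smul (TX_with X DX (proj_dfg X DX)) (r u) (a u))"
    if "open_Rn n U \<and> smooth_real n U r \<and> vs_totD (TX_with X DX (proj_dfg X DX)) n U a" for r a
  proof -
    have "fst \<circ> (\<lambda>u. tx_smul DX (r u) (a u)) = fst \<circ> a"
      by (simp add: o_def tx_smul_def)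
    then show ?thesis
      using that by (auto simp: proj_dfg_iff image_subset_iff intro!: tx_smul_in_TXset)
  qed
  show "vs_totD (TX_with X DX (proj_dfg X DX)) n U (\<lambda>u. vs_zero (TX_with X DX (proj_dfg X DX)) (q u))"
    if "vs_basD (TX_with X DX (proj_dfg X DX)) n U q" for q
  proof -
    have "fst \<circ> (\<lambda>u. tx_zero DX (q u)) = q"
      by (simp add: o_def tx_zero_def)
    then show ?thesis
      using that diffeology_plot_domain[OF X, of n U q] by (auto simp: proj_dfg_iff intro!: tx_zero_in_TXset)
  qed
qed

lemma hector_gensE:
  assumes "(k, W, q) \<in> hector_gens DX"
  obtains n U p g where "DX n U p" and "q = Tleg DX (n, U, p) \<circ> g" and "open_Rn k W"
    and "smooth_map k W n U (fst \<circ> g)" and "smooth_map k W n (Rn n) (snd \<circ> g)"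
  using assms by (auto simp: hector_gens_def plots_def TUobj_def)

lemma hector_gens_proj_dfg:
  assumes X: "diffeology X DX" and g: "(k, W, q) \<in> hector_gens DX"
  shows "proj_dfg X DX k W q"
proof -
  obtain n U p g where p: "DX n U p" and q: "q = Tleg DX (n, U, p) \<circ> g" and W: "open_Rn k W"
    and g1: "smooth_map k W n U (fst \<circ> g)" and g2: "smooth_map k W n (Rn n) (snd \<circ> g)"
    using g by (rule hector_gensE)
  have "q ` W \<subseteq> TXset X DX"
    using smooth_map_image[OF g1] smooth_map_image[OF g2] Tleg_in_TXset[OF X p]
    by (force simp: q)
  moreover have fst_q: "fst \<circ> q = p \<circ> (fst \<circ> g)"
    by (auto simp: q Tleg_fst)
  have "DX k W (fst \<circ> q)"
    unfolding fst_q by (rule diffeology_comp[OF X p W g1])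
  ultimately show ?thesis
    using W by (simp add: proj_dfg_iff)
qed

lemma hector_gens_hector: "(k, W, q) \<in> hector_gens DX \<Longrightarrow> hector X DX k W q"
  unfolding hector_def by blast

lemma hector_least:
  "hector X DX k W q \<Longrightarrow> diffeology (TXset X DX) D \<Longrightarrow>
    (\<And>k' W' q'. (k', W', q') \<in> hector_gens DX \<Longrightarrow> D k' W' q') \<Longrightarrow> D k W q"
  unfolding hector_def by blast

lemma diffeology_hector: "diffeology X DX \<Longrightarrow> diffeology (TXset X DX) (hector X DX)"
proof -
  assume X: "diffeology X DX"
  have "hector X DX = (\<lambda>k W q. \<forall>D. diffeology (TXset X DX) D \<and>
      (\<forall>(k', W', q') \<in> hector_gens DX. D k' W' q') \<longrightarrow> D k W q)"
    by (simp add: hector_def fun_eq_iff)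
  moreover have "diffeology (TXset X DX) (\<lambda>k W q. \<forall>D. diffeology (TXset X DX) D \<and>
      (\<forall>(k', W', q') \<in> hector_gens DX. D k' W' q') \<longrightarrow> D k W q)"
    by (rule diffeology_Inf[of _ _ "proj_dfg X DX"])
      (use diffeology_proj_dfg[OF X] hector_gens_proj_dfg[OF X] in auto)
  ultimately show ?thesis
    by simp
qed

lemma hector_le_proj_dfg: "diffeology X DX \<Longrightarrow> hector X DX k W q \<Longrightarrow> proj_dfg X DX k W q"
  by (erule hector_least[OF _ diffeology_proj_dfg hector_gens_proj_dfg])

lemma is_vsd_TXH: "diffeology X DX \<Longrightarrow> is_vsd (TXH X DX)"
  unfolding TXH_def by (intro is_vsd_TX_withI diffeology_hector hector_le_proj_dfg)

lemma hector_le_dvs_dfg: "hector X DX k W q \<Longrightarrow> dvs_dfg X DX k W q"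
  unfolding dvs_dfg_def by blast

lemma dvs_dfg_least:
  "dvs_dfg X DX k W q \<Longrightarrow> (\<And>k' W' q'. hector X DX k' W' q' \<Longrightarrow> D k' W' q') \<Longrightarrow>
    is_dvs (TX_with X DX D) \<Longrightarrow> D k W q"
  unfolding dvs_dfg_def by blast

lemma is_vsd_TX_withD:
  assumes "is_vsd (TX_with X DX D)"
  shows "diffeology (TXset X DX) D" and "diffeology X DX" and "dsmooth (TXset X DX) D X DX fst"
  using assms unfolding is_vsd_def TX_with_simps by blast+

lemma is_dvs_TX_withD:
  assumes "is_dvs (TX_with X DX D)"
  shows "is_vsd (TX_with X DX D)"
    and "D n U a \<Longrightarrow> D n U b \<Longrightarrow> \<forall>u\<in>U. fst (a u) = fst (b u) \<Longrightarrow>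
      D n U (\<lambda>u. tx_add DX (a u) (b u))"
    and "open_Rn n U \<Longrightarrow> smooth_real n U r \<Longrightarrow> D n U a \<Longrightarrow> D n U (\<lambda>u. tx_smul DX (r u) (a u))"
    and "DX n U q \<Longrightarrow> D n U (\<lambda>u. tx_zero DX (q u))"
  using assms unfolding is_dvs_def TX_with_simps by blast+

lemma is_dvs_TX_withI:
  assumes "is_vsd (TX_with X DX D)"
    and "\<And>n U a b. D n U a \<Longrightarrow> D n U b \<Longrightarrow> \<forall>u\<in>U. fst (a u) = fst (b u) \<Longrightarrow>
      D n U (\<lambda>u. tx_add DX (a u) (b u))"
    and "\<And>n U r a. open_Rn n U \<Longrightarrow> smooth_real n U r \<Longrightarrow> D n U a \<Longrightarrow>
      D n U (\<lambda>u. tx_smul DX (r u) (a u))"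
    and "\<And>n U q. DX n U q \<Longrightarrow> D n U (\<lambda>u. tx_zero DX (q u))"
  shows "is_dvs (TX_with X DX D)"
  using assms unfolding is_dvs_def TX_with_simps by blast

lemma is_dvs_TX_with_Inf:
  assumes dvs: "\<And>D. P D \<Longrightarrow> is_dvs (TX_with X DX D)" and P0: "P D0"
  shows "is_dvs (TX_with X DX (\<lambda>k V q. \<forall>D. P D \<longrightarrow> D k V q))"
proof (rule is_dvs_TX_withI)
  note vsd = is_vsd_TX_withD[OF is_dvs_TX_withD(1)[OF dvs]]
  have "proj_dfg X DX k V q" if "\<forall>D. P D \<longrightarrow> D k V q" for k V q
  proof -
    have q: "D0 k V q"
      using that P0 by blast
    have "open_Rn k V \<and> q ` V \<subseteq> TXset X DX"
      by (rule diffeology_plot_domain[OF vsd(1)[OF P0] q])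
    moreover have "DX k V (fst \<circ> q)"
      using vsd(3)[OF P0] q unfolding dsmooth_def by blast
    ultimately show ?thesis
      by (simp add: proj_dfg_iff)
  qed
  moreover have "diffeology (TXset X DX) (\<lambda>k V q. \<forall>D. P D \<longrightarrow> D k V q)"
    by (rule diffeology_Inf[where P = P, OF vsd(1) P0])
  ultimately show "is_vsd (TX_with X DX (\<lambda>k V q. \<forall>D. P D \<longrightarrow> D k V q))"
    using is_vsd_TX_withI[OF vsd(2)[OF P0]] by blast
  show "\<forall>D. P D \<longrightarrow> D n U (\<lambda>u. tx_add DX (a u) (b u))"
    if "\<forall>D. P D \<longrightarrow> D n U a" "\<forall>D. P D \<longrightarrow> D n U b" "\<forall>u\<in>U. fst (a u) = fst (b u)" for n U a b
  proof (intro allI impI)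
    fix D assume "P D"
    then have "D n U a" "D n U b"
      using that by blast+
    then show "D n U (\<lambda>u. tx_add DX (a u) (b u))"
      using that(3) by (rule is_dvs_TX_withD(2)[OF dvs[OF \<open>P D\<close>]])
  qed
  show "\<forall>D. P D \<longrightarrow> D n U (\<lambda>u. tx_smul DX (r u) (a u))"
    if "open_Rn n U" "smooth_real n U r" "\<forall>D. P D \<longrightarrow> D n U a" for n U r a
  proof (intro allI impI)
    fix D assume "P D"
    then have "D n U a"
      using that by blast
    with that(1,2) show "D n U (\<lambda>u. tx_smul DX (r u) (a u))"
      by (rule is_dvs_TX_withD(3)[OF dvs[OF \<open>P D\<close>]])
  qed
  show "\<forall>D. P D \<longrightarrow> D n U (\<lambda>u. tx_zero DX (q u))" if "DX n U q" for n U q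
    using that is_dvs_TX_withD(4)[OF dvs] by blast
qed

lemma is_dvs_TXdvs:
  assumes X: "diffeology X DX"
  shows "is_dvs (TXdvs X DX)"
proof -
  have "dvs_dfg X DX = (\<lambda>k V q. \<forall>D. ((\<forall>k' W' q'. hector X DX k' W' q' \<longrightarrow> D k' W' q') \<and>
      is_dvs (TX_with X DX D)) \<longrightarrow> D k V q)"
    by (simp add: dvs_dfg_def fun_eq_iff)
  then show ?thesis
    unfolding TXdvs_def
    by (auto intro!: is_dvs_TX_with_Inf[of _ _ _ "proj_dfg X DX"]
        simp: is_dvs_proj_dfg[OF X] hector_le_proj_dfg[OF X])
qed


lemma TUobj_simps [simp]:
  "vs_tot (TUobj (n, U, p)) = {z. fst z \<in> U \<and> snd z \<in> Rn n}"
  "vs_totD (TUobj (n, U, p)) = (\<lambda>k W g. open_Rn k W \<and> smooth_map k W n U (fst \<circ> g)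
                              \<and> smooth_map k W n (Rn n) (snd \<circ> g))"
  "vs_bas (TUobj (n, U, p)) = U" "vs_basD (TUobj (n, U, p)) = std_dfg n U"
  "vs_prj (TUobj (n, U, p)) = fst"
  "vs_add (TUobj (n, U, p)) = (\<lambda>a b. (fst a, \<lambda>i. snd a i + snd b i))"
  "vs_smul (TUobj (n, U, p)) = (\<lambda>r a. (fst a, \<lambda>i. r * snd a i))"
  "vs_zero (TUobj (n, U, p)) = (\<lambda>u. (u, 0))"
  by (simp_all add: TUobj_def zero_fun_def)

lemma fib_TUobj: "z \<in> fib (TUobj (n, U, p)) u \<longleftrightarrow> u \<in> U \<and> fst z = u \<and> snd z \<in> Rn n"
  by (auto simp: fib_def)

lemma vsd_hom_Tleg:
  assumes X: "diffeology X DX" and p: "DX n U p"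
    and gens: "\<And>k W q. (k, W, q) \<in> hector_gens DX \<Longrightarrow> D k W q"
  shows "vsd_hom (TUobj (n, U, p)) (TX_with X DX D) (Tleg DX (n, U, p)) (Pleg (n, U, p))"
  unfolding vsd_hom_def
proof (intro conjI ballI allI)
  have "(k, W, Tleg DX (n, U, p) \<circ> g) \<in> hector_gens DX"
    if "vs_totD (TUobj (n, U, p)) k W g" for k W g
    using that p unfolding hector_gens_def plots_def by blast
  then show "dsmooth (vs_tot (TUobj (n, U, p))) (vs_totD (TUobj (n, U, p)))
      (vs_tot (TX_with X DX D)) (vs_totD (TX_with X DX D)) (Tleg DX (n, U, p))"
    using Tleg_in_TXset[OF X p] gens unfolding dsmooth_def TX_with_simps
    by (auto simp del: TUobj_simps(2) simp: TUobj_simps(1))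
  show "dsmooth (vs_bas (TUobj (n, U, p))) (vs_basD (TUobj (n, U, p)))
      (vs_bas (TX_with X DX D)) (vs_basD (TX_with X DX D)) (Pleg (n, U, p))"
    using diffeology_plot_domain[OF X p] diffeology_comp[OF X p]
    unfolding dsmooth_def std_dfg_def TUobj_simps TX_with_simps Pleg_def snd_conv by blast
  show "vs_prj (TX_with X DX D) (Tleg DX (n, U, p) z) = Pleg (n, U, p) (vs_prj (TUobj (n, U, p)) z)" for z
    by (simp add: Tleg_fst Pleg_def)
  fix u assume "u \<in> vs_bas (TUobj (n, U, p))"
  show "Tleg DX (n, U, p) (vs_add (TUobj (n, U, p)) v w) =
      vs_add (TX_with X DX D) (Tleg DX (n, U, p) v) (Tleg DX (n, U, p) w)"
    if fib: "v \<in> fib (TUobj (n, U, p)) u" "w \<in> fib (TUobj (n, U, p)) u" for v w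
  proof -
    obtain v' w' where "v = (u, v')" "w = (u, w')" and "u \<in> U" "v' \<in> Rn n" "w' \<in> Rn n"
      using fib by (metis fib_TUobj prod.collapse)
    moreover have "(\<lambda>i. v' i + w' i) = v' + w'"
      by (simp add: fun_eq_iff)
    ultimately show ?thesis
      using Tleg_add[OF X p, of u v' w'] by simp
  qed
  show "Tleg DX (n, U, p) (vs_smul (TUobj (n, U, p)) r v) =
      vs_smul (TX_with X DX D) r (Tleg DX (n, U, p) v)"
    if fib: "v \<in> fib (TUobj (n, U, p)) u" for r v
  proof -
    obtain v' where "v = (u, v')" and "u \<in> U" "v' \<in> Rn n"
      using fib by (metis fib_TUobj prod.collapse)
    then show ?thesis
      using Tleg_scale[OF X p, of u v'] by simp
  qed
qed

lemma cocone_TX_with: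
  assumes X: "diffeology X DX"
    and gens: "\<And>k W q. (k, W, q) \<in> hector_gens DX \<Longrightarrow> D k W q"
  shows "cocone DX (TX_with X DX D) (Tleg DX) Pleg"
  unfolding cocone_def
proof (intro conjI ballI)
  fix j assume "j \<in> plots DX"
  then show "vsd_hom (TUobj j) (TX_with X DX D) (Tleg DX j) (Pleg j)"
    using vsd_hom_Tleg[OF X _ gens] by (auto simp: plots_def)
next
  fix j j' f z assume "j \<in> plots DX" "j' \<in> plots DX" "f \<in> dsx_mor j j'" "z \<in> vs_tot (TUobj j)"
  then show "Tleg DX j' (Tmap (fst j) (fst j') f z) = Tleg DX j z"
    using Tleg_Tmap[OF X] by (cases z) (auto simp: plots_def)
next
  fix j j' f u assume "j \<in> plots DX" "j' \<in> plots DX" "f \<in> dsx_mor j j'" "u \<in> fst (snd j)"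
  then show "Pleg j' (f u) = Pleg j u"
    by (auto simp: plots_def Pleg_def dsx_mor_def)
qed


definition add_monoid :: "'w set \<Rightarrow> ('w \<Rightarrow> 'w \<Rightarrow> 'w) \<Rightarrow> 'w \<Rightarrow> 'w monoid" where
  "add_monoid F add z = \<lparr>carrier = F, mult = add, one = z\<rparr>"

lemma add_monoid_simps [simp]:
  "carrier (add_monoid F add z) = F" "mult (add_monoid F add z) = add" "one (add_monoid F add z) = z"
  by (simp_all add: add_monoid_def)

locale carrier_vector_space =
  fixes F :: "'w set" and add :: "'w \<Rightarrow> 'w \<Rightarrow> 'w" and smul :: "real \<Rightarrow> 'w \<Rightarrow> 'w" and z :: 'w
  assumes zero_closed: "z \<in> F"
    and add_closed: "v \<in> F \<Longrightarrow> w \<in> F \<Longrightarrow> add v w \<in> F"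
    and smul_closed: "v \<in> F \<Longrightarrow> smul a v \<in> F"
    and add_assoc: "u \<in> F \<Longrightarrow> v \<in> F \<Longrightarrow> w \<in> F \<Longrightarrow> add (add u v) w = add u (add v w)"
    and add_commute: "v \<in> F \<Longrightarrow> w \<in> F \<Longrightarrow> add v w = add w v"
    and add_zero: "v \<in> F \<Longrightarrow> add v z = v"
    and add_inverse: "v \<in> F \<Longrightarrow> \<exists>w\<in>F. add v w = z"
    and smul_one: "v \<in> F \<Longrightarrow> smul 1 v = v"
    and smul_smul: "v \<in> F \<Longrightarrow> smul a (smul b v) = smul (a * b) v"
    and smul_add_scalar: "v \<in> F \<Longrightarrow> smul (a + b) v = add (smul a v) (smul b v)"
    and smul_add: "v \<in> F \<Longrightarrow> w \<in> F \<Longrightarrow> smul a (add v w) = add (smul a v) (smul a w)"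
begin

lemma zero_add: "v \<in> F \<Longrightarrow> add z v = v"
  using add_commute add_zero zero_closed by metis

lemma comm_monoid: "comm_monoid (add_monoid F add z)"
  by (rule comm_monoidI) (auto simp: zero_closed add_closed add_assoc zero_add intro: add_commute)

lemma add_right_cancel:
  assumes "a \<in> F" "b \<in> F" "c \<in> F" and "add a c = add b c"
  shows "a = b"
proof -
  obtain d where d: "d \<in> F" "add c d = z"
    using add_inverse assms(3) by blast
  have "a = add (add a c) d"
    using assms(1,3) d by (simp add: add_assoc add_zero)
  also have "\<dots> = add (add b c) d"
    using assms(4) by simp
  also have "\<dots> = b"
    using assms(2,3) d by (simp add: add_assoc add_zero)
  finally show ?thesis .
qed

lemma smul_zero_scalar: "v \<in> F \<Longrightarrow> smul 0 v = z"
  using smul_add_scalar[of v 0 0] zero_add[OF smul_closed, of v 0]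
    add_right_cancel[of "smul 0 v" z "smul 0 v"] smul_closed zero_closed
  by simp

lemma smul_zero: "smul a z = z"
  using smul_zero_scalar[OF zero_closed] smul_smul[OF zero_closed, of a 0] by simp

lemma add_neg: "v \<in> F \<Longrightarrow> add v (smul (- 1) v) = z"
  using smul_add_scalar[of v 1 "- 1"] smul_one smul_zero_scalar by simp

lemma finprod_closed: "f \<in> A \<rightarrow> F \<Longrightarrow> finprod (add_monoid F add z) f A \<in> F"
  using comm_monoid.finprod_closed[OF comm_monoid, of f A] by simp

lemma smul_finprod:
  assumes "finite A" and "f \<in> A \<rightarrow> F"
  shows "smul a (finprod (add_monoid F add z) f A) = finprod (add_monoid F add z) (\<lambda>j. smul a (f j)) A"
  using assms
proof (induction A rule: finite_induct)
  case empty
  then show ?case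
    by (simp add: comm_monoid.finprod_empty[OF comm_monoid] smul_zero)
next
  case (insert j A)
  then have f: "f \<in> A \<rightarrow> F" "f j \<in> F" and g: "(\<lambda>j. smul a (f j)) \<in> A \<rightarrow> F"
    using smul_closed by auto
  have "smul a (finprod (add_monoid F add z) f (insert j A))
      = smul a (add (f j) (finprod (add_monoid F add z) f A))"
    using comm_monoid.finprod_insert[OF comm_monoid, of A j f] insert f by simp
  also have "\<dots> = add (smul a (f j)) (smul a (finprod (add_monoid F add z) f A))"
    using smul_add[OF f(2) finprod_closed[OF f(1)]] .
  also have "\<dots> = add (smul a (f j)) (finprod (add_monoid F add z) (\<lambda>j. smul a (f j)) A)"
    using insert f by simp
  also have "\<dots> = finprod (add_monoid F add z) (\<lambda>j. smul a (f j)) (insert j A)"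
    using comm_monoid.finprod_insert[OF comm_monoid, of A j "\<lambda>j. smul a (f j)"] insert f g smul_closed
    by simp
  finally show ?case .
qed

end

lemma fibre_vs_carrier_vector_space:
  assumes "fibre_vs W" and "y \<in> vs_bas W"
  shows "carrier_vector_space (fib W y) (vs_add W) (vs_smul W) (vs_zero W y)"
  using bspec[OF assms(1)[unfolded fibre_vs_def] assms(2)]
  unfolding carrier_vector_space_def by meson


section \<open>The mediating map of a cocone\<close>

definition const_plot :: "'a \<Rightarrow> 'a plot" where
  "const_plot x = (0, {0}, \<lambda>_. x)"

lemma const_plot_in_Jx: "diffeology X DX \<Longrightarrow> x \<in> X \<Longrightarrow> const_plot x \<in> Jx DX x"
  using diffeology_const[OF _ open_Rn_0_singleton] by (simp add: const_plot_def Jx_def)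

lemma Jx_plots: "j \<in> Jx DX x \<Longrightarrow> j \<in> plots DX"
  by (cases j) (simp add: Jx_def plots_def)

lemma Jmor_subset_dsx_mor: "f \<in> Jmor j j' \<Longrightarrow> f \<in> dsx_mor j j'"
  by (cases j; cases j') (simp add: Jmor_def dsx_mor_def)

lemma is_dvsD:
  assumes "is_dvs E"
  shows "vs_totD E n U a \<Longrightarrow> vs_totD E n U b \<Longrightarrow> \<forall>u\<in>U. vs_prj E (a u) = vs_prj E (b u) \<Longrightarrow>
      vs_totD E n U (\<lambda>u. vs_add E (a u) (b u))"
    and "open_Rn n U \<Longrightarrow> smooth_real n U r \<Longrightarrow> vs_totD E n U a \<Longrightarrow>
      vs_totD E n U (\<lambda>u. vs_smul E (r u) (a u))"
    and "vs_basD E n U q \<Longrightarrow> vs_totD E n U (\<lambda>u. vs_zero E (q u))"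
  using assms unfolding is_dvs_def by blast+

locale plot_cocone =
  fixes X :: "'a set" and DX :: "'a dfg" and W :: "('w, 'y, 'd) vsd_scheme"
    and G :: "'a plot \<Rightarrow> pt \<times> pt \<Rightarrow> 'w" and H :: "'a plot \<Rightarrow> pt \<Rightarrow> 'y"
  assumes diffeology: "diffeology X DX" and is_vsd: "is_vsd W" and cocone: "cocone DX W G H"
begin

definition base_map :: "'a \<Rightarrow> 'y" where
  "base_map x = H (const_plot x) 0"

definition fibre_monoid :: "'a \<Rightarrow> 'w monoid" where
  "fibre_monoid x = add_monoid (fib W (base_map x)) (vs_add W) (vs_zero W (base_map x))"

text \<open>The linear extension to \<open>FS DX x\<close> of the legs \<open>G j\<close> at the origins of the centred plots.\<close>

lemma fibre_monoid_simps [simp]: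
  "carrier (fibre_monoid x) = fib W (base_map x)" "mult (fibre_monoid x) = vs_add W"
  "one (fibre_monoid x) = vs_zero W (base_map x)"
  by (simp_all add: fibre_monoid_def)

definition fibre_sum :: "'a \<Rightarrow> ('a plot \<Rightarrow> pt) \<Rightarrow> 'w" where
  "fibre_sum x s = finprod (fibre_monoid x) (\<lambda>j. G j (0, s j)) {j. s j \<noteq> 0}"

definition tangent_map :: "'a tx \<Rightarrow> 'w" where
  "tangent_map v = fibre_sum (fst v) (rep (snd v))"

lemma vsd_hom_G: "j \<in> plots DX \<Longrightarrow> vsd_hom (TUobj j) W (G j) (H j)"
  using cocone by (simp add: cocone_def)

lemma G_Tmap:
  "j \<in> plots DX \<Longrightarrow> j' \<in> plots DX \<Longrightarrow> f \<in> dsx_mor j j' \<Longrightarrow> z \<in> vs_tot (TUobj j) \<Longrightarrow>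
    G j' (Tmap (fst j) (fst j') f z) = G j z"
  using cocone unfolding cocone_def by blast

lemma H_comp:
  "j \<in> plots DX \<Longrightarrow> j' \<in> plots DX \<Longrightarrow> f \<in> dsx_mor j j' \<Longrightarrow> u \<in> fst (snd j) \<Longrightarrow> H j' (f u) = H j u"
  using cocone unfolding cocone_def by blast

lemma H_eq_base_map:
  assumes p: "DX n U p" and u: "u \<in> U"
  shows "H (n, U, p) u = base_map (p u)"
proof -
  have "p u \<in> X" and "U \<subseteq> Rn n"
    using diffeology_plot_domain[OF diffeology p] u open_Rn_subset by blast+
  then have "const_plot (p u) \<in> plots DX" and "(\<lambda>_. u) \<in> dsx_mor (const_plot (p u)) (n, U, p)"
    using Jx_plots[OF const_plot_in_Jx[OF diffeology]] smooth_map_const[OF u]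
    by (simp_all add: dsx_mor_def const_plot_def)
  then show ?thesis
    using H_comp[of "const_plot (p u)" "(n, U, p)" "\<lambda>_. u" 0] p
    by (simp add: plots_def const_plot_def base_map_def)
qed

lemma base_map_in_bas: "x \<in> X \<Longrightarrow> base_map x \<in> vs_bas W"
  using vsd_hom_G[OF Jx_plots[OF const_plot_in_Jx[OF diffeology]]]
  unfolding vsd_hom_def dsmooth_def base_map_def by (auto simp: const_plot_def)

lemma G_in_fib:
  assumes p: "DX n U p" and u: "u \<in> U" and v: "v \<in> Rn n"
  shows "G (n, U, p) (u, v) \<in> fib W (base_map (p u))"
proof -
  have "vsd_hom (TUobj (n, U, p)) W (G (n, U, p)) (H (n, U, p))"
    using vsd_hom_G p by (simp add: plots_def)
  then have "G (n, U, p) (u, v) \<in> vs_tot W" and "vs_prj W (G (n, U, p) (u, v)) = H (n, U, p) u"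
    using u v unfolding vsd_hom_def dsmooth_def by auto
  then show ?thesis
    using H_eq_base_map[OF p u] by (simp add: fib_def)
qed

lemma G_centred_in_fib: "j \<in> Jx DX x \<Longrightarrow> v \<in> Rn (fst j) \<Longrightarrow> G j (0, v) \<in> fib W (base_map x)"
  using G_in_fib[of _ _ _ 0 v] by (cases j) (auto simp: Jx_def)

lemma centred_in_fib_TUobj:
  assumes "j \<in> Jx DX x" and "a \<in> Rn (fst j)"
  shows "0 \<in> vs_bas (TUobj j)" and "(0, a) \<in> fib (TUobj j) 0"
  using assms by (cases j; auto simp: fib_def Jx_def)+

lemma G_centred_add:
  assumes j: "j \<in> Jx DX x" and a: "a \<in> Rn (fst j)" and b: "b \<in> Rn (fst j)"
  shows "G j (0, a + b) = vs_add W (G j (0, a)) (G j (0, b))"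
proof -
  have "\<forall>x\<in>vs_bas (TUobj j). \<forall>v\<in>fib (TUobj j) x. \<forall>w\<in>fib (TUobj j) x.
      G j (vs_add (TUobj j) v w) = vs_add W (G j v) (G j w)"
    using vsd_hom_G[OF Jx_plots[OF j]] unfolding vsd_hom_def by blast
  then have "G j (vs_add (TUobj j) (0, a) (0, b)) = vs_add W (G j (0, a)) (G j (0, b))"
    using centred_in_fib_TUobj[OF j a] centred_in_fib_TUobj(2)[OF j b] by blast
  moreover have "(\<lambda>i. a i + b i) = a + b"
    by (simp add: fun_eq_iff)
  ultimately show ?thesis
    by (cases j) simp
qed

lemma G_centred_scale:
  assumes j: "j \<in> Jx DX x" and a: "a \<in> Rn (fst j)"
  shows "G j (0, \<lambda>i. r * a i) = vs_smul W r (G j (0, a))"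
proof -
  have "\<forall>x\<in>vs_bas (TUobj j). \<forall>r. \<forall>v\<in>fib (TUobj j) x.
      G j (vs_smul (TUobj j) r v) = vs_smul W r (G j v)"
    using vsd_hom_G[OF Jx_plots[OF j]] unfolding vsd_hom_def by blast
  then have "G j (vs_smul (TUobj j) r (0, a)) = vs_smul W r (G j (0, a))"
    using centred_in_fib_TUobj[OF j a] by blast
  then show ?thesis
    by (cases j) simp
qed

lemma fibre_carrier_vector_space:
  "x \<in> X \<Longrightarrow> carrier_vector_space (fib W (base_map x)) (vs_add W) (vs_smul W) (vs_zero W (base_map x))"
  using is_vsd by (intro fibre_vs_carrier_vector_space base_map_in_bas) (simp_all add: is_vsd_def)

lemma comm_monoid_fibre_monoid: "x \<in> X \<Longrightarrow> comm_monoid (fibre_monoid x)"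
  unfolding fibre_monoid_def by (rule carrier_vector_space.comm_monoid[OF fibre_carrier_vector_space])

lemma G_centred_zero:
  assumes "j \<in> Jx DX x" and "x \<in> X"
  shows "G j (0, 0) = vs_zero W (base_map x)"
proof -
  have "G j (0, \<lambda>i. 0 * (0::pt) i) = vs_smul W 0 (G j (0, 0))"
    using assms(1) zero_in_Rn by (rule G_centred_scale)
  then show ?thesis
    using carrier_vector_space.smul_zero_scalar[OF fibre_carrier_vector_space[OF assms(2)]
        G_centred_in_fib[OF assms(1) zero_in_Rn]]
    by (simp add: zero_fun_def)
qed

lemma G_centred_funcset:
  assumes "s \<in> FS DX x" and "A \<subseteq> Jx DX x"
  shows "(\<lambda>j. G j (0, s j)) \<in> A \<rightarrow> fib W (base_map x)"
proof
  fix j assume "j \<in> A"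
  then show "G j (0, s j) \<in> fib W (base_map x)"
    using assms by (intro G_centred_in_fib FS_value) auto
qed

lemma fibre_sum_superset:
  assumes x: "x \<in> X" and s: "s \<in> FS DX x"
    and A: "finite A" "{j. s j \<noteq> 0} \<subseteq> A" "A \<subseteq> Jx DX x"
  shows "fibre_sum x s = finprod (fibre_monoid x) (\<lambda>j. G j (0, s j)) A"
  unfolding fibre_sum_def
proof (rule comm_monoid.finprod_mono_neutral_cong_left[OF comm_monoid_fibre_monoid[OF x] A(1,2)])
  show "G i (0, s i) = \<one>\<^bsub>fibre_monoid x\<^esub>" if "i \<in> A - {j. s j \<noteq> 0}" for i
  proof -
    have "s i = 0" "i \<in> Jx DX x"
      using that A(3) by auto
    then show ?thesis
      using G_centred_zero[OF _ x, of i] by simp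
  qed
  show "(\<lambda>j. G j (0, s j)) \<in> A \<rightarrow> carrier (fibre_monoid x)"
    using G_centred_funcset[OF s A(3)] by simp
qed simp

lemma fibre_sum_in_fib:
  assumes x: "x \<in> X" and s: "s \<in> FS DX x"
  shows "fibre_sum x s \<in> fib W (base_map x)"
proof -
  have "{j. s j \<noteq> 0} \<subseteq> Jx DX x"
    using FS_support_Jx[OF s] by blast
  then have "(\<lambda>j. G j (0, s j)) \<in> {j. s j \<noteq> 0} \<rightarrow> fib W (base_map x)"
    by (rule G_centred_funcset[OF s])
  then show ?thesis
    unfolding fibre_sum_def fibre_monoid_def
    by (rule carrier_vector_space.finprod_closed[OF fibre_carrier_vector_space[OF x]])
qed

lemma fibre_sum_add:
  assumes x: "x \<in> X" and s: "s \<in> FS DX x" and t: "t \<in> FS DX x"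
  shows "fibre_sum x (s + t) = vs_add W (fibre_sum x s) (fibre_sum x t)"
proof -
  define A where "A = {j. s j \<noteq> 0} \<union> {j. t j \<noteq> 0}"
  have A: "finite A" "A \<subseteq> Jx DX x"
    using FS_finite_support[OF s] FS_finite_support[OF t] FS_support_Jx[OF s] FS_support_Jx[OF t]
    by (auto simp: A_def)
  have "fibre_sum x (s + t) = finprod (fibre_monoid x) (\<lambda>j. G j (0, (s + t) j)) A"
    by (rule fibre_sum_superset[OF x FS_add[OF s t] A(1) _ A(2)]) (auto simp: A_def)
  also have "\<dots> = finprod (fibre_monoid x) (\<lambda>j. vs_add W (G j (0, s j)) (G j (0, t j))) A"
  proof (rule comm_monoid.finprod_cong'[OF comm_monoid_fibre_monoid[OF x] refl])
    show "G j (0, (s + t) j) = vs_add W (G j (0, s j)) (G j (0, t j))" if "j \<in> A" for j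
      using G_centred_add[OF subsetD[OF A(2) that] FS_value[OF s] FS_value[OF t]] by simp
    show "(\<lambda>j. vs_add W (G j (0, s j)) (G j (0, t j))) \<in> A \<rightarrow> carrier (fibre_monoid x)"
      using G_centred_funcset[OF s A(2)] G_centred_funcset[OF t A(2)]
        carrier_vector_space.add_closed[OF fibre_carrier_vector_space[OF x]]
      by (auto simp: fibre_monoid_def)
  qed
  also have "\<dots> = vs_add W (finprod (fibre_monoid x) (\<lambda>j. G j (0, s j)) A)
      (finprod (fibre_monoid x) (\<lambda>j. G j (0, t j)) A)"
    using comm_monoid.finprod_multf[OF comm_monoid_fibre_monoid[OF x]]
      G_centred_funcset[OF s A(2)] G_centred_funcset[OF t A(2)]
    by simp
  also have "\<dots> = vs_add W (fibre_sum x s) (fibre_sum x t)"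
    using fibre_sum_superset[OF x s A(1) _ A(2)] fibre_sum_superset[OF x t A(1) _ A(2)]
    by (simp add: A_def)
  finally show ?thesis .
qed

lemma fibre_sum_scale:
  assumes x: "x \<in> X" and s: "s \<in> FS DX x"
  shows "fibre_sum x (scale_fam r s) = vs_smul W r (fibre_sum x s)"
proof -
  define A where "A = {j. s j \<noteq> 0}"
  have A: "finite A" "A \<subseteq> Jx DX x"
    using FS_finite_support[OF s] FS_support_Jx[OF s] by (auto simp: A_def)
  have "fibre_sum x (scale_fam r s) = finprod (fibre_monoid x) (\<lambda>j. G j (0, scale_fam r s j)) A"
    by (rule fibre_sum_superset[OF x FS_scale[OF s] A(1) _ A(2)]) (auto simp: A_def fun_eq_iff)
  also have "\<dots> = finprod (fibre_monoid x) (\<lambda>j. vs_smul W r (G j (0, s j))) A"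
  proof (rule comm_monoid.finprod_cong'[OF comm_monoid_fibre_monoid[OF x] refl])
    show "G j (0, scale_fam r s j) = vs_smul W r (G j (0, s j))" if "j \<in> A" for j
    proof -
      have "scale_fam r s j = (\<lambda>i. r * s j i)"
        by (simp add: fun_eq_iff)
      then show ?thesis
        using G_centred_scale[OF subsetD[OF A(2) that] FS_value[OF s]] by simp
    qed
    show "(\<lambda>j. vs_smul W r (G j (0, s j))) \<in> A \<rightarrow> carrier (fibre_monoid x)"
      using G_centred_funcset[OF s A(2)] carrier_vector_space.smul_closed[OF fibre_carrier_vector_space[OF x]]
      by (auto simp: fibre_monoid_def)
  qed
  also have "\<dots> = vs_smul W r (finprod (fibre_monoid x) (\<lambda>j. G j (0, s j)) A)"
    using carrier_vector_space.smul_finprod[OF fibre_carrier_vector_space[OF x] A(1)]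
      G_centred_funcset[OF s A(2)]
    by (simp add: fibre_monoid_def)
  also have "\<dots> = vs_smul W r (fibre_sum x s)"
    by (simp add: fibre_sum_def A_def)
  finally show ?thesis .
qed

lemma fibre_sum_inj:
  assumes x: "x \<in> X" and j: "j \<in> Jx DX x" and v: "v \<in> Rn (fst j)"
  shows "fibre_sum x (Defs.inj j v) = G j (0, v)"
proof -
  have "fibre_sum x (Defs.inj j v) = finprod (fibre_monoid x) (\<lambda>k. G k (0, Defs.inj j v k)) {j}"
    by (rule fibre_sum_superset[OF x FS_inj[OF j v]]) (use j in \<open>auto simp: inj_apply\<close>)
  also have "\<dots> = vs_add W (G j (0, v)) (vs_zero W (base_map x))"
    using comm_monoid.finprod_insert[OF comm_monoid_fibre_monoid[OF x], of "{}" j "\<lambda>k. G k (0, Defs.inj j v k)"]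
      G_centred_in_fib[OF j v]
    by (simp add: inj_apply comm_monoid.finprod_empty[OF comm_monoid_fibre_monoid[OF x]])
  also have "\<dots> = G j (0, v)"
    by (rule carrier_vector_space.add_zero[OF fibre_carrier_vector_space[OF x] G_centred_in_fib[OF j v]])
  finally show ?thesis .
qed

lemma fibre_sum_zero: "x \<in> X \<Longrightarrow> fibre_sum x 0 = vs_zero W (base_map x)"
  by (simp add: fibre_sum_def comm_monoid.finprod_empty[OF comm_monoid_fibre_monoid])

text \<open>On a generator of \<open>Nsp\<close> this is the compatibility of the legs \<open>G\<close> with the morphisms
  of centred plots.\<close>

lemma fibre_sum_Nsp:
  assumes x: "x \<in> X"
  shows "a \<in> Nsp DX x \<Longrightarrow> fibre_sum x a = vs_zero W (base_map x)"
proof (induction rule: Nsp.induct)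
  case N0
  show ?case
    using fibre_sum_zero[OF x] unfolding zero_fun_def .
next
  case (Ngen j j' f v)
  let ?w = "Dm (fst j) (fst j') f 0 v"
  have w: "?w \<in> Rn (fst j')"
    by (rule Dm_in_Rn)
  have "(0, v) \<in> vs_tot (TUobj j)"
    using Ngen(1,4) by (cases j) (simp add: Jx_def)
  then have "G j' (Tmap (fst j) (fst j') f (0, v)) = G j (0, v)"
    using Ngen(1-3) by (intro G_Tmap Jx_plots Jmor_subset_dsx_mor)
  moreover have "Tmap (fst j) (fst j') f (0, v) = (0, ?w)"
    using Ngen(3) by (cases j; cases j') (simp add: Tmap_def Jmor_def)
  ultimately have Gw: "G j' (0, ?w) = G j (0, v)"
    by simp
  have "Defs.inj j' ?w + scale_fam (-1) (Defs.inj j v) = (\<lambda>k i. Defs.inj j' ?w k i - Defs.inj j v k i)"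
    by (simp add: fun_eq_iff)
  moreover have "fibre_sum x (Defs.inj j' ?w + scale_fam (-1) (Defs.inj j v))
      = vs_add W (G j (0, v)) (vs_smul W (-1) (G j (0, v)))"
    using fibre_sum_add[OF x FS_inj[OF Ngen(2) w] FS_scale[OF FS_inj[OF Ngen(1,4)]]]
      fibre_sum_scale[OF x FS_inj[OF Ngen(1,4)]] fibre_sum_inj[OF x Ngen(2) w]
      fibre_sum_inj[OF x Ngen(1,4)] Gw
    by simp
  ultimately show ?case
    using carrier_vector_space.add_neg[OF fibre_carrier_vector_space[OF x] G_centred_in_fib[OF Ngen(1,4)]]
    by simp
next
  case (Nadd a b)
  then show ?case
    using fibre_sum_add[OF x Nsp_subset_FS Nsp_subset_FS, of a b] fun_add_pointwise[of a b]
      carrier_vector_space.add_zero[OF fibre_carrier_vector_space[OF x]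
        carrier_vector_space.zero_closed[OF fibre_carrier_vector_space[OF x]]]
    by simp
next
  case (Nsmul a r)
  then show ?case
    using fibre_sum_scale[OF x Nsp_subset_FS, of a r]
      carrier_vector_space.smul_zero[OF fibre_carrier_vector_space[OF x]]
    by (simp add: scale_fam_def)
qed

lemma fibre_sum_cls:
  assumes x: "x \<in> X" and s: "s \<in> FS DX x" and t: "t \<in> FS DX x" and st: "s - t \<in> Nsp DX x"
  shows "fibre_sum x s = fibre_sum x t"
proof -
  have "fibre_sum x s = fibre_sum x (t + (s - t))"
    by simp
  also have "\<dots> = vs_add W (fibre_sum x t) (vs_zero W (base_map x))"
    using fibre_sum_add[OF x t FS_diff[OF s t]] fibre_sum_Nsp[OF x st] by simp
  also have "\<dots> = fibre_sum x t"
    by (rule carrier_vector_space.add_zero[OF fibre_carrier_vector_space[OF x] fibre_sum_in_fib[OF x t]])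
  finally show ?thesis .
qed

lemma tangent_map_cls:
  assumes "x \<in> X" and "s \<in> FS DX x"
  shows "tangent_map (x, cls DX x s) = fibre_sum x s"
  unfolding tangent_map_def fst_conv snd_conv
  by (rule fibre_sum_cls[OF assms(1) rep_cls(1)[OF assms(2)] assms(2) rep_cls(2)[OF assms(2)]])

lemma tangent_map_Tleg:
  assumes p: "DX n U p" and u: "u \<in> U" and v: "v \<in> Rn n"
  shows "tangent_map (Tleg DX (n, U, p) (u, v)) = G (n, U, p) (u, v)"
proof -
  let ?J = "recentre (n, U, p) u"
  have x: "p u \<in> X"
    using diffeology_plot_domain[OF diffeology p] u by blast
  have J: "?J \<in> Jx DX (p u)"
    by (rule recentre_in_Jx[OF diffeology p u])
  have v': "v \<in> Rn (fst ?J)"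
    using v by (simp add: recentre_def)
  have "tangent_map (Tleg DX (n, U, p) (u, v)) = fibre_sum (p u) (Defs.inj ?J v)"
    using tangent_map_cls[OF x FS_inj[OF J v']] by (simp add: Tleg_eq)
  also have "\<dots> = G ?J (0, v)"
    by (rule fibre_sum_inj[OF x J v'])
  also have "\<dots> = G (n, U, p) (Tmap (fst ?J) (fst (n, U, p)) (\<lambda>w. w + u) (0, v))"
  proof (rule G_Tmap[symmetric])
    show "?J \<in> plots DX" "(n, U, p) \<in> plots DX"
      using recentre_plot[OF diffeology p u] p by (simp_all add: plots_def)
    show "(\<lambda>w. w + u) \<in> dsx_mor ?J (n, U, p)"
      by (rule translation_in_dsx_mor[OF diffeology p u])
    show "(0, v) \<in> vs_tot (TUobj ?J)"
      using J v by (simp add: recentre_def Jx_def)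
  qed
  also have "\<dots> = G (n, U, p) (u, v)"
    using Dm_translation[OF v] by (simp add: Tmap_def recentre_def)
  finally show ?thesis .
qed

lemma tangent_map_in_fib: "v \<in> TXset X DX \<Longrightarrow> tangent_map v \<in> fib W (base_map (fst v))"
  by (metis TXset_iff fibre_sum_in_fib prod.collapse tangent_map_cls)

lemma
  assumes x: "x \<in> X" and a: "a \<in> fib (TX_with X DX D) x" and b: "b \<in> fib (TX_with X DX D) x"
  shows tangent_map_add: "tangent_map (tx_add DX a b) = vs_add W (tangent_map a) (tangent_map b)"
proof -
  obtain s t where "s \<in> FS DX x" "a = (x, cls DX x s)" "t \<in> FS DX x" "b = (x, cls DX x t)"
    using a b x by (metis fib_TX_withE)
  then show ?thesis
    by (simp add: tx_add_cls tangent_map_cls[OF x] FS_add fibre_sum_add[OF x])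
qed

lemma tangent_map_scale:
  assumes x: "x \<in> X" and a: "a \<in> fib (TX_with X DX D) x"
  shows "tangent_map (tx_smul DX r a) = vs_smul W r (tangent_map a)"
proof -
  obtain s where "s \<in> FS DX x" "a = (x, cls DX x s)"
    using a x by (metis fib_TX_withE)
  then show ?thesis
    by (simp add: tx_smul_cls tangent_map_cls[OF x] FS_scale fibre_sum_scale[OF x])
qed

lemma tangent_map_zero: "x \<in> X \<Longrightarrow> tangent_map (tx_zero DX x) = vs_zero W (base_map x)"
  by (simp add: tx_zero_cls tangent_map_cls FS_zero fibre_sum_zero)

lemma dsmooth_base_map: "dsmooth X DX (vs_bas W) (vs_basD W) base_map"
  unfolding dsmooth_def
proof (intro conjI allI impI)
  show "base_map ` X \<subseteq> vs_bas W"
    using base_map_in_bas by blast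
  fix n U q assume q: "DX n U q"
  have U: "open_Rn n U"
    using diffeology_plot_domain[OF diffeology q] by blast
  have "vsd_hom (TUobj (n, U, q)) W (G (n, U, q)) (H (n, U, q))"
    using q by (intro vsd_hom_G) (simp add: plots_def)
  then have "dsmooth U (std_dfg n U) (vs_bas W) (vs_basD W) (H (n, U, q))"
    unfolding vsd_hom_def by simp
  moreover have "std_dfg n U n U (\<lambda>x. x)"
    using U smooth_map_id[OF open_Rn_subset[OF U]] by (simp add: std_dfg_def)
  ultimately have "vs_basD W n U (H (n, U, q) \<circ> (\<lambda>x. x))"
    unfolding dsmooth_def by blast
  then show "vs_basD W n U (base_map \<circ> q)"
    by (rule diffeology_cong[OF is_vsd[unfolded is_vsd_def, THEN conjunct2, THEN conjunct1]])
      (simp add: H_eq_base_map[OF q])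
qed

text \<open>The plots of \<open>TX\<close> along which the mediating map is smooth; it contains Hector's
  generators, and it is a diffeological vector space diffeology when \<open>W\<close> is one.\<close>

definition mediating_dfg :: "'a tx dfg" where
  "mediating_dfg k V q \<longleftrightarrow> proj_dfg X DX k V q \<and> vs_totD W k V (tangent_map \<circ> q)"

lemma diffeology_tot: "diffeology (vs_tot W) (vs_totD W)"
  using is_vsd by (simp add: is_vsd_def)

lemma diffeology_mediating_dfg: "diffeology (TXset X DX) mediating_dfg"
proof -
  have img: "tangent_map ` TXset X DX \<subseteq> vs_tot W"
    using tangent_map_in_fib by (auto simp: fib_def)
  have "mediating_dfg = (\<lambda>k V q. proj_dfg X DX k V q \<and>
      pullback_dfg (TXset X DX) tangent_map (vs_totD W) k V q)"
    by (auto simp: fun_eq_iff mediating_dfg_def pullback_dfg_def proj_dfg_iff)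
  then show ?thesis
    using diffeology_inter[OF diffeology_proj_dfg[OF diffeology] diffeology_pullback[OF diffeology_tot img]]
    by simp
qed

lemma hector_gens_mediating_dfg:
  assumes g: "(k, V, q) \<in> hector_gens DX"
  shows "mediating_dfg k V q"
proof -
  obtain n U p g where p: "DX n U p" and q: "q = Tleg DX (n, U, p) \<circ> g" and V: "open_Rn k V"
    and g1: "smooth_map k V n U (fst \<circ> g)" and g2: "smooth_map k V n (Rn n) (snd \<circ> g)"
    using g by (rule hector_gensE)
  have "vsd_hom (TUobj (n, U, p)) W (G (n, U, p)) (H (n, U, p))"
    using vsd_hom_G p by (simp add: plots_def)
  then have "vs_totD W k V (G (n, U, p) \<circ> g)"
    using V g1 g2 unfolding vsd_hom_def dsmooth_def by simp
  moreover have "\<forall>w\<in>V. (G (n, U, p) \<circ> g) w = (tangent_map \<circ> q) w"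
    using smooth_map_image[OF g1] smooth_map_image[OF g2] tangent_map_Tleg[OF p]
    by (force simp: q)
  ultimately have "vs_totD W k V (tangent_map \<circ> q)"
    by (rule diffeology_cong[OF diffeology_tot])
  then show ?thesis
    using hector_gens_proj_dfg[OF diffeology g] by (simp add: mediating_dfg_def)
qed

lemma hector_le_mediating_dfg: "hector X DX k V q \<Longrightarrow> mediating_dfg k V q"
  by (erule hector_least[OF _ diffeology_mediating_dfg hector_gens_mediating_dfg])

lemma vsd_hom_tangent_map:
  assumes le: "\<And>k V q. D k V q \<Longrightarrow> mediating_dfg k V q"
  shows "vsd_hom (TX_with X DX D) W tangent_map base_map"
  unfolding vsd_hom_def TX_with_simps
proof (intro conjI ballI allI)
  show "dsmooth (TXset X DX) D (vs_tot W) (vs_totD W) tangent_map"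
    using tangent_map_in_fib le by (auto simp: dsmooth_def fib_def mediating_dfg_def)
  show "dsmooth X DX (vs_bas W) (vs_basD W) base_map"
    by (rule dsmooth_base_map)
  show "vs_prj W (tangent_map v) = base_map (fst v)" if "v \<in> TXset X DX" for v
    using tangent_map_in_fib[OF that] by (simp add: fib_def)
  fix x assume "x \<in> X"
  then show "tangent_map (tx_add DX v w) = vs_add W (tangent_map v) (tangent_map w)"
    and "tangent_map (tx_smul DX r v) = vs_smul W r (tangent_map v)"
    if "v \<in> fib (TX_with X DX D) x" "w \<in> fib (TX_with X DX D) x" for v w r
    using that by (simp_all add: tangent_map_add tangent_map_scale)
qed

lemma mediator_tangent_map:
  assumes "\<And>k V q. D k V q \<Longrightarrow> mediating_dfg k V q"
  shows "mediator DX (TX_with X DX D) W G H tangent_map base_map"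
  unfolding mediator_def
proof (intro conjI ballI)
  show "vsd_hom (TX_with X DX D) W tangent_map base_map"
    using assms by (rule vsd_hom_tangent_map)
  fix j assume "j \<in> plots DX"
  then obtain n U p where j: "j = (n, U, p)" and p: "DX n U p"
    by (auto simp: plots_def)
  show "tangent_map (Tleg DX j z) = G j z" if "z \<in> vs_tot (TUobj j)" for z
    using that tangent_map_Tleg[OF p, of "fst z" "snd z"] by (simp add: j)
  show "base_map (Pleg j u) = H j u" if "u \<in> fst (snd j)" for u
    using that H_eq_base_map[OF p] by (simp add: j Pleg_def)
qed

lemma mediating_dfgD:
  assumes "mediating_dfg n U a"
  shows "proj_dfg X DX n U a" and "vs_totD W n U (tangent_map \<circ> a)"
    and "u \<in> U \<Longrightarrow> a u \<in> TXset X DX"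
  using assms by (auto simp: mediating_dfg_def proj_dfg_iff)

lemma mediating_dfg_in_fib:
  assumes "mediating_dfg n U a" and "u \<in> U"
  shows "fst (a u) \<in> X" and "a u \<in> fib (TX_with X DX mediating_dfg) (fst (a u))"
    and "tangent_map (a u) \<in> fib W (base_map (fst (a u)))"
  using mediating_dfgD(3)[OF assms] tangent_map_in_fib by (auto simp: TXset_iff fib_def)

lemma mediating_dfg_add:
  assumes W: "is_dvs W" and a: "mediating_dfg n U a" and b: "mediating_dfg n U b"
    and e: "\<forall>u\<in>U. fst (a u) = fst (b u)"
  shows "mediating_dfg n U (\<lambda>u. tx_add DX (a u) (b u))"
proof -
  note fib_a = mediating_dfg_in_fib[OF a]
    and fib_b = mediating_dfg_in_fib[OF b]
  have "vs_totD W n U (\<lambda>u. vs_add W ((tangent_map \<circ> a) u) ((tangent_map \<circ> b) u))"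
    using fib_a(3) fib_b(3) e
    by (intro is_dvsD(1)[OF W] mediating_dfgD(2)[OF a] mediating_dfgD(2)[OF b]) (auto simp: fib_def)
  moreover have "\<forall>u\<in>U. vs_add W ((tangent_map \<circ> a) u) ((tangent_map \<circ> b) u)
      = (tangent_map \<circ> (\<lambda>u. tx_add DX (a u) (b u))) u"
    using tangent_map_add[OF fib_a(1,2), of _ "b _"] fib_b(2) e by simp
  ultimately have "vs_totD W n U (tangent_map \<circ> (\<lambda>u. tx_add DX (a u) (b u)))"
    by (rule diffeology_cong[OF diffeology_tot])
  moreover have "proj_dfg X DX n U (\<lambda>u. tx_add DX (a u) (b u))"
    using mediating_dfgD(1)[OF a] mediating_dfgD(1)[OF b] e
    by (rule is_dvs_TX_withD(2)[OF is_dvs_proj_dfg[OF diffeology]])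
  ultimately show ?thesis
    by (simp add: mediating_dfg_def)
qed

lemma mediating_dfg_scale:
  assumes W: "is_dvs W" and a: "mediating_dfg n U a" and U: "open_Rn n U" and r: "smooth_real n U r"
  shows "mediating_dfg n U (\<lambda>u. tx_smul DX (r u) (a u))"
proof -
  note fib_a = mediating_dfg_in_fib[OF a]
  have "vs_totD W n U (\<lambda>u. vs_smul W (r u) ((tangent_map \<circ> a) u))"
    using U r mediating_dfgD(2)[OF a] by (rule is_dvsD(2)[OF W])
  moreover have "\<forall>u\<in>U. vs_smul W (r u) ((tangent_map \<circ> a) u) = (tangent_map \<circ> (\<lambda>u. tx_smul DX (r u) (a u))) u"
    using tangent_map_scale[OF fib_a(1,2)] by simp
  ultimately have "vs_totD W n U (tangent_map \<circ> (\<lambda>u. tx_smul DX (r u) (a u)))"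
    by (rule diffeology_cong[OF diffeology_tot])
  moreover have "proj_dfg X DX n U (\<lambda>u. tx_smul DX (r u) (a u))"
    using U r mediating_dfgD(1)[OF a] by (rule is_dvs_TX_withD(3)[OF is_dvs_proj_dfg[OF diffeology]])
  ultimately show ?thesis
    by (simp add: mediating_dfg_def)
qed

lemma mediating_dfg_zero:
  assumes W: "is_dvs W" and q: "DX n U q"
  shows "mediating_dfg n U (\<lambda>u. tx_zero DX (q u))"
proof -
  have "vs_basD W n U (base_map \<circ> q)"
    using dsmooth_base_map q by (simp add: dsmooth_def)
  then have "vs_totD W n U (\<lambda>u. vs_zero W ((base_map \<circ> q) u))"
    by (rule is_dvsD(3)[OF W])
  moreover have "\<forall>u\<in>U. vs_zero W ((base_map \<circ> q) u) = (tangent_map \<circ> (\<lambda>u. tx_zero DX (q u))) u"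
    using diffeology_plot_domain[OF diffeology q] tangent_map_zero by auto
  ultimately have "vs_totD W n U (tangent_map \<circ> (\<lambda>u. tx_zero DX (q u)))"
    by (rule diffeology_cong[OF diffeology_tot])
  moreover have "proj_dfg X DX n U (\<lambda>u. tx_zero DX (q u))"
    using q by (rule is_dvs_TX_withD(4)[OF is_dvs_proj_dfg[OF diffeology]])
  ultimately show ?thesis
    by (simp add: mediating_dfg_def)
qed

lemma is_dvs_mediating_dfg: "is_dvs W \<Longrightarrow> is_dvs (TX_with X DX mediating_dfg)"
  by (intro is_dvs_TX_withI is_vsd_TX_withI diffeology diffeology_mediating_dfg
      mediating_dfg_add mediating_dfg_scale mediating_dfg_zero) (auto dest: mediating_dfgD)

lemma dvs_dfg_le_mediating_dfg: "is_dvs W \<Longrightarrow> dvs_dfg X DX k V q \<Longrightarrow> mediating_dfg k V q"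
  by (erule dvs_dfg_least[OF _ hector_le_mediating_dfg is_dvs_mediating_dfg])

lemma mediator_inj:
  assumes M: "mediator DX (TX_with X DX D) W G H g h" and j: "j \<in> Jx DX x" and v: "v \<in> Rn (fst j)"
  shows "g (x, cls DX x (Defs.inj j v)) = G j (0, v)"
proof -
  have "(0, v) \<in> vs_tot (TUobj j)"
    using j v by (cases j) (simp add: Jx_def)
  then have "g (Tleg DX j (0, v)) = G j (0, v)"
    using M Jx_plots[OF j] unfolding mediator_def by blast
  then show ?thesis
    by (simp add: Tleg_centred[OF j])
qed

text \<open>A mediator is determined on each class by linearity, writing a finitely supported family as
  a sum of single-entry families, each of which is a vector of some \<open>Tp\<close>.\<close>

lemma mediator_cls:
  assumes M: "mediator DX (TX_with X DX D) W G H g h" and x: "x \<in> X"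
  shows "finite A \<Longrightarrow> s \<in> FS DX x \<Longrightarrow> {j. s j \<noteq> 0} = A \<Longrightarrow> g (x, cls DX x s) = fibre_sum x s"
proof (induction A arbitrary: s rule: finite_induct)
  case empty
  have c: "const_plot x \<in> Jx DX x"
    by (rule const_plot_in_Jx[OF diffeology x])
  have "\<forall>j. s j = 0"
    using empty.prems(2) by blast
  then have "s = Defs.inj (const_plot x) 0"
    by (simp add: fun_eq_iff inj_apply)
  then show ?case
    using mediator_inj[OF M c zero_in_Rn] fibre_sum_inj[OF x c zero_in_Rn] by (simp only:)
next
  case (insert j A)
  define s' where "s' = s(j := 0)"
  have "s j \<noteq> 0"
    using insert.prems(2) by blast
  then have j: "j \<in> Jx DX x"
    by (rule FS_support_Jx[OF insert.prems(1)])
  have sj: "s j \<in> Rn (fst j)"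
    by (rule FS_value[OF insert.prems(1)])
  have "{k. s' k \<noteq> 0} = {k. s k \<noteq> 0} - {j}"
    by (simp add: s'_def set_eq_iff)
  then have supp: "{k. s' k \<noteq> 0} = A"
    using insert.hyps(2) insert.prems(2) by (simp add: Diff_insert_absorb)
  have "s' k \<in> Rn (fst k)" for k
    using FS_value[OF insert.prems(1), of k] by (simp add: s'_def)
  moreover have "s' k \<noteq> 0 \<Longrightarrow> k \<in> Jx DX x" for k
    using FS_support_Jx[OF insert.prems(1), of k] by (simp add: s'_def split: if_splits)
  ultimately have s': "s' \<in> FS DX x"
    using insert.hyps(1) supp by (simp add: FS_iff)
  have dec: "s = s' + Defs.inj j (s j)"
    by (simp add: fun_eq_iff s'_def inj_apply)
  have hom: "g (tx_add DX a b) = vs_add W (g a) (g b)"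
    if "a \<in> fib (TX_with X DX D) x" "b \<in> fib (TX_with X DX D) x" for a b
    using M x that unfolding mediator_def vsd_hom_def by simp
  have "g (x, cls DX x s) = g (tx_add DX (x, cls DX x s') (x, cls DX x (Defs.inj j (s j))))"
    using tx_add_cls[OF s' FS_inj[OF j sj]] dec by simp
  also have "\<dots> = vs_add W (g (x, cls DX x s')) (g (x, cls DX x (Defs.inj j (s j))))"
    using x s' FS_inj[OF j sj] by (intro hom cls_in_fib)
  also have "\<dots> = vs_add W (fibre_sum x s') (fibre_sum x (Defs.inj j (s j)))"
    using insert.IH[OF s' supp] mediator_inj[OF M j sj] fibre_sum_inj[OF x j sj] by simp
  also have "\<dots> = fibre_sum x s"
    using fibre_sum_add[OF x s' FS_inj[OF j sj]] dec by simp
  finally show ?case .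
qed

lemma mediator_eq_tangent_map:
  assumes M: "mediator DX (TX_with X DX D) W G H g h" and v: "v \<in> TXset X DX"
  shows "g v = tangent_map v"
proof -
  obtain s where x: "fst v \<in> X" and s: "s \<in> FS DX (fst v)" and v: "v = (fst v, cls DX (fst v) s)"
    using v by (metis TXset_iff prod.collapse)
  then show ?thesis
    using mediator_cls[OF M x FS_finite_support[OF s] s refl] tangent_map_cls[OF x s] by metis
qed

lemma mediator_eq_base_map:
  assumes M: "mediator DX (TX_with X DX D) W G H g h" and x: "x \<in> X"
  shows "h x = base_map x"
proof -
  have "const_plot x \<in> plots DX" and "0 \<in> fst (snd (const_plot x))"
    using Jx_plots[OF const_plot_in_Jx[OF diffeology x]] by (simp_all add: const_plot_def)
  then have "h (Pleg (const_plot x) 0) = H (const_plot x) 0"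
    using M unfolding mediator_def by blast
  then show ?thesis
    by (simp add: base_map_def const_plot_def Pleg_def)
qed

lemma unique_mediator_TX_with:
  assumes "\<And>k V q. D k V q \<Longrightarrow> mediating_dfg k V q"
  shows "unique_mediator DX (TX_with X DX D) W G H"
  unfolding unique_mediator_def TX_with_simps
proof (intro conjI allI impI ballI)
  show "\<exists>g h. mediator DX (TX_with X DX D) W G H g h"
    using mediator_tangent_map[OF assms] by blast
next
  fix g h g' h' v
  assume "mediator DX (TX_with X DX D) W G H g h \<and> mediator DX (TX_with X DX D) W G H g' h'"
    and "v \<in> TXset X DX"
  then show "g v = g' v"
    using mediator_eq_tangent_map[of D g h v] mediator_eq_tangent_map[of D g' h' v] by simp
next
  fix g h g' h' x
  assume "mediator DX (TX_with X DX D) W G H g h \<and> mediator DX (TX_with X DX D) W G H g' h'"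
    and "x \<in> X"
  then show "h x = h' x"
    using mediator_eq_base_map[of D g h x] mediator_eq_base_map[of D g' h' x] by simp
qed

end

theorem theorem4p17:
  fixes X :: "'a set" and DX :: "'a dfg"
  assumes "diffeology X DX"
  shows "(is_dvs (TXdvs X DX) \<and> cocone DX (TXdvs X DX) (Tleg DX) Pleg \<and>
          (\<forall>(W :: ('w, 'y) vsd) G H. is_dvs W \<and> cocone DX W G H \<longrightarrow>
              unique_mediator DX (TXdvs X DX) W G H))
       \<and> (is_vsd (TXH X DX) \<and> cocone DX (TXH X DX) (Tleg DX) Pleg \<and>
          (\<forall>(W :: ('w, 'y) vsd) G H. is_vsd W \<and> cocone DX W G H \<longrightarrow>
              unique_mediator DX (TXH X DX) W G H))"
proof (intro conjI allI impI)
  show "is_dvs (TXdvs X DX)"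
    by (rule is_dvs_TXdvs[OF assms])
  show "is_vsd (TXH X DX)"
    by (rule is_vsd_TXH[OF assms])
  show "cocone DX (TXdvs X DX) (Tleg DX) Pleg"
    unfolding TXdvs_def by (rule cocone_TX_with[OF assms]) (intro hector_le_dvs_dfg hector_gens_hector)
  show "cocone DX (TXH X DX) (Tleg DX) Pleg"
    unfolding TXH_def by (rule cocone_TX_with[OF assms]) (rule hector_gens_hector)
next
  fix W :: "('w, 'y) vsd" and G H
  assume W: "is_dvs W \<and> cocone DX W G H"
  then interpret plot_cocone X DX W G H
    using assms by unfold_locales (simp_all add: is_dvs_def)
  show "unique_mediator DX (TXdvs X DX) W G H"
    unfolding TXdvs_def using W by (intro unique_mediator_TX_with dvs_dfg_le_mediating_dfg) simp_all
next
  fix W :: "('w, 'y) vsd" and G H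
  assume "is_vsd W \<and> cocone DX W G H"
  then interpret plot_cocone X DX W G H
    using assms by unfold_locales simp_all
  show "unique_mediator DX (TXH X DX) W G H"
    unfolding TXH_def by (intro unique_mediator_TX_with hector_le_mediating_dfg)
qed

end
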